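(* Suppose there exists a positive integer $n$ such that $[n]$ admits no $3$-good partition, and let $n$ be the smallest such integer. Then $n\ge 845$, and $n$ belongs to the set $$N_o=\{n: n\equiv 2 \pmod 3\}\cap\{n : 3^t+1<n<(3^{t+1}+1)/2 \text{ for some integer } t\ge 4\}.$$
   Context: A partition of $[n]=\{1,\dots,n\}$ into nonempty parts is called $3$-good if every part has at most $3$ elements and the sum of the elements of every part is a power of $3$, i.e. equals $3^s$ for some integer $s\ge 0$ (so the singleton $\{1\}$ is allowed). The bound $n\ge 845$ rests on a computer verification that $[n]$ admits a $3$-good partition for all $n\le 844$. *)

theory Defs
  imports Main "HOL-Library.Disjoint_Sets"
begin

definition three_good :: "nat \<Rightarrow> nat set set \<Rightarrow> bool" where
  "three_good n P \<longleftrightarrow> partition_on {1..n} P \<and>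
     (\<forall>B\<in>P. card B \<le> 3 \<and> (\<exists>s::nat. \<Sum>B = 3 ^ s))"

definition admits_three_good :: "nat \<Rightarrow> bool" where
  "admits_three_good n \<longleftrightarrow> (\<exists>P. three_good n P)"

end

theory Submission
  imports Defs
begin

text \<open>Let \<open>n\<close> be a minimal counterexample and \<open>3^t \<le> n < 3^(t+1)\<close>. If \<open>3^(t+1) < 2n\<close>, the numbers
  in \<open>[3^(t+1) - n, n]\<close> split into pairs with sum \<open>3^(t+1)\<close>, leaving a shorter initial segment.
  Otherwise \<open>n = 3^t + h\<close> with \<open>2h \<le> 3^t\<close>; if \<open>h \<noteq> 2 (mod 3)\<close>, the interval
  \<open>[3^t - h, 3^t + h]\<close> splits into triples with sum \<open>3^(t+1)\<close> (and possibly the singleton \<open>{3^t}\<close>),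
  again leaving a shorter initial segment. So \<open>n \<equiv> 2 (mod 3)\<close> lies in a range
  \<open>3^t + 1 < n \<le> (3^(t+1) + 1)/2\<close>. The finitely many such \<open>n < 845\<close> are excluded by explicit
  certificates, which are replayed by a checker proved sound once and for all.\<close>

definition good_block :: "nat set \<Rightarrow> bool" where
  "good_block B \<longleftrightarrow> card B \<le> 3 \<and> (\<exists>s. \<Sum>B = 3 ^ s)"

definition good_set :: "nat set \<Rightarrow> bool" where
  "good_set S \<longleftrightarrow> (\<exists>P. partition_on S P \<and> (\<forall>B\<in>P. good_block B))"

lemma admits_three_good_iff_good_set: "admits_three_good n \<longleftrightarrow> good_set {1..n}"
  unfolding admits_three_good_def three_good_def good_set_def good_block_def by blast

lemma good_block_nonempty: "good_block B \<Longrightarrow> B \<noteq> {}"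
  unfolding good_block_def by (metis sum.empty zero_less_power zero_less_numeral less_irrefl)

lemma good_block_power_of_three: "good_block {3 ^ s}"
  unfolding good_block_def by auto

lemma good_set_empty: "good_set {}"
  unfolding good_set_def by (auto simp: partition_on_empty)

lemma admits_three_good_0: "admits_three_good 0"
  using good_set_empty by (simp add: admits_three_good_iff_good_set)

lemma good_set_block: "good_block B \<Longrightarrow> good_set B"
  unfolding good_set_def by (auto intro!: exI[of _ "{B}"] simp: partition_on_space good_block_nonempty)

lemma good_set_Un:
  assumes "good_set A" "good_set B" "A \<inter> B = {}"
  shows "good_set (A \<union> B)"
proof -
  obtain P where P: "partition_on A P" "\<forall>X\<in>P. good_block X"
    using assms(1) good_set_def by blast
  obtain Q where Q: "partition_on B Q" "\<forall>X\<in>Q. good_block X"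
    using assms(2) good_set_def by blast
  have "partition_on (A \<union> B) (P \<union> Q)"
    using P(1) Q(1) assms(3) unfolding partition_on_def by (auto intro!: disjoint_union)
  then show ?thesis
    using P Q unfolding good_set_def by blast
qed

lemma good_set_UN:
  assumes "\<And>i. i \<in> I \<Longrightarrow> good_block (F i)"
    and "\<And>i j. i \<in> I \<Longrightarrow> j \<in> I \<Longrightarrow> F i \<noteq> F j \<Longrightarrow> F i \<inter> F j = {}"
  shows "good_set (\<Union>i\<in>I. F i)"
  unfolding good_set_def
proof (intro exI conjI)
  show "partition_on (\<Union>i\<in>I. F i) (F ` I)"
    using assms good_block_nonempty unfolding partition_on_def disjoint_def by fastforce
  show "\<forall>B\<in>F ` I. good_block B"
    using assms(1) by blast
qed

text \<open>Pairing \<open>y\<close> with \<open>c - y\<close> never pairs an element with itself, since \<open>c\<close> is odd.\<close>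
lemma good_set_reflection_invariant:
  assumes c: "c = 3 ^ s" and T: "\<And>y. y \<in> T \<Longrightarrow> y < c \<and> c - y \<in> T"
  shows "good_set T"
proof -
  have "good_set (\<Union>y\<in>{y \<in> T. 2 * y < c}. {y, c - y})"
  proof (rule good_set_UN)
    fix y assume "y \<in> {y \<in> T. 2 * y < c}"
    then show "good_block {y, c - y}"
      using c unfolding good_block_def by (auto simp: card_insert_if)
  qed auto
  moreover have "T = (\<Union>y\<in>{y \<in> T. 2 * y < c}. {y, c - y})"
  proof
    show "T \<subseteq> (\<Union>y\<in>{y \<in> T. 2 * y < c}. {y, c - y})"
    proof
      fix y assume y: "y \<in> T"
      have "odd c" using c by simp
      then have "2 * y < c \<or> 2 * (c - y) < c"
        using T[OF y] by presburger
      moreover have "y = c - (c - y)"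
        using T[OF y] by simp
      ultimately show "y \<in> (\<Union>y\<in>{y \<in> T. 2 * y < c}. {y, c - y})"
        using y T[OF y] by blast
    qed
    show "(\<Union>y\<in>{y \<in> T. 2 * y < c}. {y, c - y}) \<subseteq> T"
      using T by auto
  qed
  ultimately show ?thesis by simp
qed

section \<open>Intervals centred at a power of three\<close>

text \<open>In offsets from \<open>C\<close>, triple \<open>j\<close> is \<open>{j, m + j, -(m + 2j)}\<close> for \<open>j \<le> m\<close> and
  \<open>{m + j, -(2j - m - 1), -(2m + 1 - j)}\<close> for \<open>m < j \<le> 2m\<close>: each has offset sum \<open>0\<close>, and together
  they cover every nonzero offset in \<open>[-3m, 3m]\<close> exactly once. \<open>zigzag_label C m x\<close> is the index
  of the triple containing \<open>x\<close>.\<close>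
definition zigzag_triple :: "nat \<Rightarrow> nat \<Rightarrow> nat \<Rightarrow> nat set" where
  "zigzag_triple C m j =
     (if j \<le> m then {C + j, C + m + j, C - (m + 2 * j)}
      else {C + m + j, C - (2 * j - m - 1), C - (2 * m + 1 - j)})"

lemma zigzag_triple_sum:
  assumes "3 * m < C" "j \<in> {1..2 * m}"
  shows "\<Sum>(zigzag_triple C m j) = 3 * C"
proof (cases "j \<le> m")
  case True
  then have "\<Sum>{C + j, C + m + j, C - (m + 2 * j)} = (C + j) + (C + m + j) + (C - (m + 2 * j))"
    using assms by simp
  then show ?thesis
    using True assms unfolding zigzag_triple_def by simp
next
  case False
  have "\<Sum>{C + m + j, C - (2 * j - m - 1), C - (2 * m + 1 - j)}
      = (C + m + j) + (C - (2 * j - m - 1)) + (C - (2 * m + 1 - j))"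
    using False assms by (subst sum.insert; auto)+
  then show ?thesis
    using False assms unfolding zigzag_triple_def by simp
qed

lemma zigzag_triple_card: "card (zigzag_triple C m j) \<le> 3"
  unfolding zigzag_triple_def by (auto intro!: card_insert_le_m1)

lemma zigzag_triple_subset:
  assumes "3 * m < C" "j \<in> {1..2 * m}"
  shows "zigzag_triple C m j \<subseteq> {C - 3 * m..C + 3 * m} - {C}"
  using assms unfolding zigzag_triple_def by auto

definition zigzag_label :: "nat \<Rightarrow> nat \<Rightarrow> nat \<Rightarrow> nat" where
  "zigzag_label C m x =
     (if C < x then (if x - C \<le> m then x - C else x - C - m)
      else if C - x \<le> m then 2 * m + 1 - (C - x)
      else if even (C - x - m) then (C - x - m) div 2
      else (C - x + m + 1) div 2)"

lemma zigzag_label_triple: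
  assumes "3 * m < C" "j \<in> {1..2 * m}" "x \<in> zigzag_triple C m j"
  shows "zigzag_label C m x = j"
proof (cases "j \<le> m")
  case True
  have "C - (C - (m + 2 * j)) - m = 2 * j"
    using True assms(1) by simp
  then show ?thesis
    using True assms unfolding zigzag_triple_def zigzag_label_def by auto
next
  case False
  have "C - (C - (2 * j - m - 1)) - m = 2 * (j - m) - 1"
    "C - (C - (2 * j - m - 1)) + m + 1 = 2 * j"
    using False assms(1,2) by auto
  then show ?thesis
    using False assms unfolding zigzag_triple_def zigzag_label_def by auto
qed

lemma zigzag_label_triple_cover:
  assumes "3 * m < C" "x \<in> {C - 3 * m..C + 3 * m} - {C}"
  shows "zigzag_label C m x \<in> {1..2 * m} \<and> x \<in> zigzag_triple C m (zigzag_label C m x)"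
proof -
  have x: "C - 3 * m \<le> x" "x \<le> C + 3 * m" "x \<noteq> C"
    using assms(2) by auto
  define d where "d = C - x"
  consider "C < x" "x - C \<le> m" | "C + m < x" | "x < C" "d \<le> m"
    | "x < C" "m < d" "even (d - m)" | "x < C" "m < d" "odd (d - m)"
    using x by fastforce
  then show ?thesis
  proof cases
    case 1
    then have "zigzag_label C m x = x - C" "x = C + (x - C)"
      unfolding zigzag_label_def by auto
    then show ?thesis
      using 1 unfolding zigzag_triple_def by auto
  next
    case 2
    define j where "j = x - C - m"
    have "zigzag_label C m x = j" "x = C + m + j" "1 \<le> j" "j \<le> 2 * m"
      using 2 x unfolding zigzag_label_def j_def by auto
    then show ?thesis
      unfolding zigzag_triple_def by auto
  next
    case 3
    define j where "j = 2 * m + 1 - d"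
    have "zigzag_label C m x = j" "x = C - (2 * m + 1 - j)" "m < j" "j \<le> 2 * m"
      using 3 x unfolding zigzag_label_def j_def d_def by auto
    then show ?thesis
      unfolding zigzag_triple_def by auto
  next
    case 4
    then obtain j where j: "d - m = 2 * j" by blast
    have "zigzag_label C m x = j" "x = C - (m + 2 * j)" "1 \<le> j" "j \<le> m"
      using 4 x j unfolding zigzag_label_def d_def by auto
    then show ?thesis
      unfolding zigzag_triple_def by auto
  next
    case 5
    then have "even (d + m + 1)"
      by presburger
    then obtain j where j: "d + m + 1 = 2 * j" ..
    have "zigzag_label C m x = j" "x = C - (2 * j - m - 1)" "m < j" "j \<le> 2 * m"
      using 5 x j unfolding zigzag_label_def d_def by auto
    then show ?thesis
      unfolding zigzag_triple_def by auto
  qed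
qed

lemma good_set_punctured_interval:
  assumes "3 * m < C" "3 * C = 3 ^ s"
  shows "good_set ({C - 3 * m..C + 3 * m} - {C})"
proof -
  have "good_set (\<Union>j\<in>{1..2 * m}. zigzag_triple C m j)"
  proof (rule good_set_UN)
    fix j assume "j \<in> {1..2 * m}"
    then show "good_block (zigzag_triple C m j)"
      using assms zigzag_triple_sum zigzag_triple_card unfolding good_block_def by metis
  next
    fix i j assume "i \<in> {1..2 * m}" "j \<in> {1..2 * m}" "zigzag_triple C m i \<noteq> zigzag_triple C m j"
    then show "zigzag_triple C m i \<inter> zigzag_triple C m j = {}"
      using zigzag_label_triple[OF assms(1)] by blast
  qed
  moreover have "(\<Union>j\<in>{1..2 * m}. zigzag_triple C m j) = {C - 3 * m..C + 3 * m} - {C}"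
    using zigzag_triple_subset[OF assms(1)] zigzag_label_triple_cover[OF assms(1)] by blast
  ultimately show ?thesis by simp
qed

lemma good_block_symmetric_triple:
  assumes C: "C = 3 ^ t" and "0 < r" "r < C"
  shows "good_block {C - r, C, C + r}"
proof -
  have "C - r \<noteq> C" "C - r \<noteq> C + r" "C \<noteq> C + r"
    using assms(2,3) by auto
  then have "\<Sum>{C - r, C, C + r} = (C - r) + C + (C + r)"
    by simp
  also have "\<dots> = 3 ^ Suc t"
    using C assms(3) by simp
  finally have "\<Sum>{C - r, C, C + r} = 3 ^ Suc t" .
  moreover have "card {C - r, C, C + r} \<le> 3"
    by (auto intro!: card_insert_le_m1)
  ultimately show ?thesis
    unfolding good_block_def by blast
qed

lemma good_set_centred_interval:
  assumes C: "C = 3 ^ t" and "r < C" "r mod 3 \<noteq> 2"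
  shows "good_set {C - r..C + r}"
proof -
  define m where "m = r div 3"
  have punctured: "good_set ({C - 3 * m..C + 3 * m} - {C})"
    using assms(2) C by (intro good_set_punctured_interval[of m C "Suc t"]) (auto simp: m_def)
  have "r = 3 * m \<or> r = 3 * m + 1"
    using assms(3) unfolding m_def by presburger
  then show ?thesis
  proof
    assume r: "r = 3 * m"
    have "good_set {C}"
      using C good_set_block good_block_power_of_three by simp
    with punctured have "good_set (({C - 3 * m..C + 3 * m} - {C}) \<union> {C})"
      by (rule good_set_Un) auto
    moreover have "({C - 3 * m..C + 3 * m} - {C}) \<union> {C} = {C - r..C + r}"
      using r assms(2) by auto
    ultimately show ?thesis by simp
  next
    assume r: "r = 3 * m + 1"
    have "good_set {C - r, C, C + r}"
      using r assms(2) by (intro good_set_block good_block_symmetric_triple[OF C]) auto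
    with punctured have "good_set (({C - 3 * m..C + 3 * m} - {C}) \<union> {C - r, C, C + r})"
      by (rule good_set_Un) (use r assms(2) in auto)
    moreover have "({C - 3 * m..C + 3 * m} - {C}) \<union> {C - r, C, C + r} = {C - r..C + r}"
      using r assms(2) by auto
    ultimately show ?thesis by simp
  qed
qed

section \<open>Minimal counterexamples\<close>

lemma good_set_reflected_interval:
  assumes "c = 3 ^ s" "n < c"
  shows "good_set {c - n..n}"
  using assms(2) by (intro good_set_reflection_invariant[OF assms(1)]) auto

lemma admits_three_good_extend:
  assumes "admits_three_good k" "good_set {Suc k..n}" "k \<le> n"
  shows "admits_three_good n"
proof -
  have "good_set ({1..k} \<union> {Suc k..n})"
    using assms(1,2) unfolding admits_three_good_iff_good_set by (rule good_set_Un) auto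
  moreover have "{1..k} \<union> {Suc k..n} = {1..n}"
    using assms(3) by auto
  ultimately show ?thesis
    unfolding admits_three_good_iff_good_set by simp
qed

definition exceptional_candidate :: "nat \<Rightarrow> bool" where
  "exceptional_candidate n \<longleftrightarrow> n mod 3 = 2 \<and> (\<exists>t. 3 ^ t + 1 < n \<and> 2 * n \<le> 3 ^ Suc t)"

lemma admits_three_good_by_reflection:
  assumes smaller: "\<And>k. k < n \<Longrightarrow> admits_three_good k"
    and "n < 3 ^ s" "3 ^ s < 2 * n"
  shows "admits_three_good n"
proof -
  define c :: nat where "c = 3 ^ s"
  have "good_set {c - n..n}"
    using assms(2) unfolding c_def by (rule good_set_reflected_interval[OF refl])
  moreover have "Suc (c - n - 1) = c - n" "c - n - 1 < n"
    using assms(2,3) unfolding c_def by simp_all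
  ultimately show ?thesis
    by (intro admits_three_good_extend[OF smaller[of "c - n - 1"]]) simp_all
qed

lemma admits_three_good_by_centred_interval:
  assumes smaller: "\<And>k. k < n \<Longrightarrow> admits_three_good k"
    and "C = 3 ^ t" "n = C + h" "h < C" "h mod 3 \<noteq> 2"
  shows "admits_three_good n"
proof -
  have "good_set {C - h..C + h}"
    using assms(4,5) by (rule good_set_centred_interval[OF assms(2)])
  moreover have "Suc (C - h - 1) = C - h" "C - h - 1 < n"
    using assms(3,4) by simp_all
  ultimately show ?thesis
    using assms(3) by (intro admits_three_good_extend[OF smaller[of "C - h - 1"]]) simp_all
qed

lemma admits_three_good_if_not_exceptional:
  assumes smaller: "\<And>k. k < n \<Longrightarrow> admits_three_good k"
    and "\<not> exceptional_candidate n"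
  shows "admits_three_good n"
proof (cases "n = 0")
  case True
  then show ?thesis
    using admits_three_good_0 by simp
next
  case False
  then obtain t where t: "3 ^ t \<le> n" "n < 3 ^ Suc t"
    using ex_power_ivl1[of 3 n] by auto
  define C :: nat where "C = 3 ^ t"
  define h where "h = n - C"
  have n: "n = C + h"
    using t(1) unfolding h_def C_def by simp
  show ?thesis
  proof (cases "3 ^ Suc t < 2 * n")
    case True
    with t(2) show ?thesis
      by (intro admits_three_good_by_reflection[of n] smaller)
  next
    case False
    then have "2 * h \<le> C"
      using n unfolding C_def by simp
    moreover have "0 < C"
      unfolding C_def by simp
    ultimately have "h < C"
      by linarith
    have "h mod 3 \<noteq> 2"
    proof
      assume h: "h mod 3 = 2"
      then have "2 \<le> h"
        by presburger
      then have "3 dvd C"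
        using \<open>2 * h \<le> C\<close> unfolding C_def by (cases t) auto
      then have "n mod 3 = 2"
        using h n by presburger
      moreover have "3 ^ t + 1 < n \<and> 2 * n \<le> 3 ^ Suc t"
        using \<open>2 \<le> h\<close> n False unfolding C_def by simp
      ultimately show False
        using assms(2) unfolding exceptional_candidate_def by blast
    qed
    with n \<open>h < C\<close> show ?thesis
      by (intro admits_three_good_by_centred_interval[of n C t h] smaller C_def)
  qed
qed

section \<open>Replaying certificates\<close>

definition small_powers_of_three :: "nat list" where
  "small_powers_of_three = map ((^) 3) [0..<8]"

lemma power_of_three_if_mem_small_powers_of_three: "x \<in> set small_powers_of_three \<Longrightarrow> \<exists>s. x = 3 ^ s"
  unfolding small_powers_of_three_def by auto

lemma small_powers_of_three_eq: "small_powers_of_three = [1, 3, 9, 27, 81, 243, 729, 2187]"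
  by (simp add: small_powers_of_three_def upt_rec)

datatype move = Block "nat list" | Shrink | Reflect nat | Centre nat

text \<open>A state \<open>(a, R, X)\<close> stands for the set \<open>{1..a} \<union> R - X\<close> still to be partitioned.
  \<open>Block B\<close> removes a good block, \<open>Shrink\<close> lowers \<open>a\<close> past a used number, \<open>Reflect c\<close> removes
  all pairs \<open>{y, c - y}\<close> still present in \<open>{c - a..a}\<close>, and \<open>Centre C\<close> removes the
  interval of radius \<open>a - C\<close> around \<open>C\<close>.\<close>
definition remaining :: "nat \<Rightarrow> nat list \<Rightarrow> nat list \<Rightarrow> nat set" where
  "remaining a R X = {1..a} \<union> set R - set X"

fun replay :: "nat \<Rightarrow> nat list \<Rightarrow> nat list \<Rightarrow> move list \<Rightarrow> nat option" where
  "replay a R X [] = (if R = [] \<and> (\<forall>x\<in>set X. a < x) then Some a else None)"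
| "replay a R X (Block B # ms) =
     (if distinct B \<and> length B \<le> 3 \<and> sum_list B \<in> set small_powers_of_three \<and>
         (\<forall>b\<in>set B. (b \<in> set R \<or> 0 < b \<and> b \<le> a) \<and> b \<notin> set X)
      then replay a (filter (\<lambda>r. r \<notin> set B) R) (filter (\<lambda>b. b \<le> a) B @ X) ms else None)"
| "replay a R X (Shrink # ms) =
     (if a \<in> set X \<and> a \<notin> set R then replay (a - 1) R (removeAll a X) ms else None)"
| "replay a R X (Reflect c # ms) =
     (if c \<in> set small_powers_of_three \<and> a < c \<and> c < 2 * a \<and> (\<forall>r\<in>set R. a < r \<and> r \<notin> set X)
      then replay (c - a - 1) (R @ map (\<lambda>x. c - x) (filter (\<lambda>x. c - a \<le> x \<and> x \<le> a \<and> c - x \<notin> set X) X))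
             (filter (\<lambda>x. x < c - a) X) ms
      else None)"
| "replay a R X (Centre C # ms) =
     (if C \<in> set small_powers_of_three \<and> C < a \<and> (a - C) mod 3 \<noteq> 2 \<and> a - C < C \<and>
         (\<forall>x\<in>set X. x < C - (a - C) \<or> a < x) \<and> (\<forall>r\<in>set R. a < r)
      then replay (C - (a - C) - 1) R X ms else None)"

lemma good_set_remaining_Block:
  assumes "distinct B" "length B \<le> 3" "sum_list B \<in> set small_powers_of_three"
    and "\<forall>b\<in>set B. (b \<in> set R \<or> 0 < b \<and> b \<le> a) \<and> b \<notin> set X"
    and "good_set (remaining a (filter (\<lambda>r. r \<notin> set B) R) (filter (\<lambda>b. b \<le> a) B @ X))"
  shows "good_set (remaining a R X)"
proof -
  have "good_block (set B)"
    using assms(1-3) unfolding good_block_def small_powers_of_three_def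
    by (auto simp: distinct_card sum.distinct_set_conv_list)
  then have "good_set (remaining a (filter (\<lambda>r. r \<notin> set B) R) (filter (\<lambda>b. b \<le> a) B @ X) \<union> set B)"
    by (rule good_set_Un[OF assms(5) good_set_block]) (auto simp: remaining_def)
  moreover have "remaining a (filter (\<lambda>r. r \<notin> set B) R) (filter (\<lambda>b. b \<le> a) B @ X) \<union> set B
      = remaining a R X"
    using assms(4) unfolding remaining_def by auto
  ultimately show ?thesis by simp
qed

lemma remaining_Shrink:
  assumes "a \<in> set X" "a \<notin> set R"
  shows "remaining (a - 1) R (removeAll a X) = remaining a R X"
  unfolding remaining_def
proof (rule set_eqI)
  fix z
  show "z \<in> {1..a - 1} \<union> set R - set (removeAll a X) \<longleftrightarrow> z \<in> {1..a} \<union> set R - set X"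
    using assms by (cases "z = a") auto
qed

lemma good_set_remaining_Reflect:
  assumes c: "c = 3 ^ s" and "a < c" "c < 2 * a" "\<forall>r\<in>set R. a < r \<and> r \<notin> set X"
    and "good_set (remaining (c - a - 1)
           (R @ map (\<lambda>x. c - x) (filter (\<lambda>x. c - a \<le> x \<and> x \<le> a \<and> c - x \<notin> set X) X))
           (filter (\<lambda>x. x < c - a) X))" (is "good_set ?rest")
  shows "good_set (remaining a R X)"
proof -
  define T where "T = {y. c - a \<le> y \<and> y \<le> a \<and> y \<notin> set X \<and> c - y \<notin> set X}"
  have "good_set T"
    using assms(2) unfolding T_def by (intro good_set_reflection_invariant[OF c]) auto
  then have "good_set (?rest \<union> T)"
    by (rule good_set_Un[OF assms(5)]) (use assms(2,4) in \<open>auto simp: remaining_def T_def\<close>)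
  moreover have "?rest \<union> T = remaining a R X"
  proof
    show "?rest \<union> T \<subseteq> remaining a R X"
      using assms(2-4) unfolding remaining_def T_def by auto
    show "remaining a R X \<subseteq> ?rest \<union> T"
    proof
      fix z assume z: "z \<in> remaining a R X"
      show "z \<in> ?rest \<union> T"
      proof (cases "z \<in> set R \<or> z < c - a \<or> z \<in> T")
        case True
        then show ?thesis
          using z unfolding remaining_def by auto
      next
        case False
        then have "c - z \<in> set X" "c - a \<le> c - z" "c - z \<le> a" "z = c - (c - z)"
          using z assms(2) unfolding remaining_def T_def by auto
        then show ?thesis
          using z unfolding remaining_def by auto
      qed
    qed
  qed
  ultimately show ?thesis by simp
qed

lemma good_set_remaining_Centre:
  assumes C: "C = 3 ^ t" and "C < a" "(a - C) mod 3 \<noteq> 2" "a - C < C"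
    and "\<forall>x\<in>set X. x < C - (a - C) \<or> a < x" "\<forall>r\<in>set R. a < r"
    and "good_set (remaining (C - (a - C) - 1) R X)"
  shows "good_set (remaining a R X)"
proof -
  have "good_set {C - (a - C)..C + (a - C)}"
    using assms(4,3) by (rule good_set_centred_interval[OF C])
  then have "good_set (remaining (C - (a - C) - 1) R X \<union> {C - (a - C)..a})"
    using assms(2,6) by (intro good_set_Un[OF assms(7)]) (auto simp: remaining_def)
  moreover have "remaining (C - (a - C) - 1) R X \<union> {C - (a - C)..a} = remaining a R X"
    using assms(2,4-6) unfolding remaining_def by auto
  ultimately show ?thesis by simp
qed

lemma replay_sound:
  "replay a R X ms = Some b \<Longrightarrow> good_set {1..b} \<Longrightarrow> good_set (remaining a R X)"
proof (induction a R X ms rule: replay.induct)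
  case (1 a R X)
  then have "remaining a R X = {1..b}"
    unfolding remaining_def by (auto split: if_splits)
  with "1.prems"(2) show ?case by simp
next
  case (2 a R X B ms)
  then show ?case
    using good_set_remaining_Block by (auto split: if_splits)
next
  case (3 a R X ms)
  then show ?case
    using remaining_Shrink by (auto split: if_splits)
next
  case (4 a R X c ms)
  have cond: "c \<in> set small_powers_of_three \<and> a < c \<and> c < 2 * a \<and> (\<forall>r\<in>set R. a < r \<and> r \<notin> set X)"
    using "4.prems"(1) by (simp split: if_splits)
  then obtain s where "c = 3 ^ s"
    using power_of_three_if_mem_small_powers_of_three by blast
  then show ?case
    by (rule good_set_remaining_Reflect) (use cond "4.IH" "4.prems" in \<open>simp_all split: if_splits\<close>)
next
  case (5 a R X C ms)
  have cond: "C \<in> set small_powers_of_three \<and> C < a \<and> (a - C) mod 3 \<noteq> 2 \<and> a - C < C \<and>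
      (\<forall>x\<in>set X. x < C - (a - C) \<or> a < x) \<and> (\<forall>r\<in>set R. a < r)"
    using "5.prems"(1) by (simp split: if_splits)
  then obtain t where "C = 3 ^ t"
    using power_of_three_if_mem_small_powers_of_three by blast
  then show ?case
    by (rule good_set_remaining_Centre) (use cond "5.IH" "5.prems" in \<open>simp_all split: if_splits\<close>)
qed

lemma admits_three_good_if_replay:
  assumes "replay n [] [] ms = Some b" "admits_three_good b"
  shows "admits_three_good n"
  using replay_sound[OF assms(1)] assms(2)
  unfolding admits_three_good_iff_good_set remaining_def by simp

definition certified :: "nat \<Rightarrow> nat \<Rightarrow> (nat \<times> move list) list \<Rightarrow> bool" where
  "certified t K cs \<longleftrightarrow> map fst cs = map (\<lambda>k. 3 ^ t + 2 + 3 * k) [0..<K] \<and>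
     list_all (\<lambda>(n, ms). \<exists>b<n. replay n [] [] ms = Some b) cs"

lemma certified_replay:
  assumes "certified t K cs" "k < K"
  shows "\<exists>ms b. replay (3 ^ t + 2 + 3 * k) [] [] ms = Some b \<and> b < 3 ^ t + 2 + 3 * k"
proof -
  have keys: "map fst cs = map (\<lambda>k. 3 ^ t + 2 + 3 * k) [0..<K]"
    and valid: "list_all (\<lambda>(n, ms). \<exists>b<n. replay n [] [] ms = Some b) cs"
    using assms(1) unfolding certified_def by blast+
  have "k < length cs"
    using arg_cong[OF keys, of length] assms(2) by simp
  moreover obtain n ms where nms: "cs ! k = (n, ms)"
    by fastforce
  ultimately have "n = 3 ^ t + 2 + 3 * k"
    using arg_cong[OF keys, of "\<lambda>xs. xs ! k"] assms(2) by simp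
  moreover have "\<exists>b<n. replay n [] [] ms = Some b"
    using valid \<open>k < length cs\<close> nms unfolding list_all_length by fastforce
  ultimately show ?thesis by blast
qed

text \<open>Certificates for the exceptional candidates \<open>n = 3^t + 2 + 3k < 845\<close>, found by computer
  search; each replays \<open>{1..n}\<close> down to a shorter initial segment.\<close>
definition certificates_2 :: "(nat \<times> move list) list" where
  "certificates_2 =
    [(11, [Block [11, 10, 6], Shrink, Shrink, Block [9], Shrink, Reflect 9, Block [3]])]"

definition certificates_3 :: "(nat \<times> move list) list" where
  "certificates_3 =
    [(29, [Block [29, 28, 24], Shrink, Shrink, Block [27], Shrink, Reflect 27, Block [3]]),
     (32, [Block [32, 31, 18], Shrink, Shrink, Block [30, 26, 25], Shrink, Block [29, 28, 24],
           Shrink, Shrink, Block [27], Shrink, Shrink, Shrink, Shrink, Reflect 27, Block [9]]),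
     (35, [Block [35, 34, 12], Shrink, Shrink, Block [33, 32, 16], Shrink, Shrink, Centre 27,
           Reflect 27, Block [15, 11, 1], Centre 3, Shrink]),
     (38, [Block [38, 37, 6], Shrink, Shrink, Block [36, 35, 10], Shrink, Shrink, Centre 27,
           Reflect 27, Block [17, 7, 3], Shrink, Shrink, Reflect 9, Shrink])]"

definition certificates_4 :: "(nat \<times> move list) list" where
  "certificates_4 =
    [(83, [Block [83, 82, 78], Shrink, Shrink, Block [81], Shrink, Reflect 81, Block [3]]),
     (86, [Block [86, 85, 72], Shrink, Shrink, Block [84, 80, 79], Shrink, Block [83, 82, 78],
           Shrink, Shrink, Block [81], Shrink, Shrink, Shrink, Shrink, Reflect 81, Block [9]]),
     (89, [Block [89, 88, 66], Shrink, Shrink, Block [87, 86, 70], Shrink, Shrink, Centre 81,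
           Reflect 81, Block [15, 11, 1], Centre 3, Shrink]),
     (92, [Block [92, 91, 60], Shrink, Shrink, Block [90, 89, 64], Shrink, Shrink, Centre 81,
           Reflect 81, Block [21, 6], Block [17, 7, 3], Shrink, Shrink, Reflect 9, Shrink]),
     (95, [Block [95, 94, 54], Shrink, Shrink, Block [93, 90, 60], Shrink, Block [92, 82, 69],
           Shrink, Block [91, 77, 75], Shrink, Shrink, Block [89, 78, 76], Shrink,
           Block [88, 81, 74], Shrink, Block [87, 83, 73], Shrink, Block [86, 85, 72], Shrink,
           Shrink, Block [84, 80, 79], Shrink, Shrink, Shrink, Shrink, Shrink, Shrink, Shrink,
           Shrink, Shrink, Shrink, Shrink, Shrink, Shrink, Reflect 81, Block [27], Block [21, 6],
           Block [12, 8, 7], Block [9], Shrink, Shrink, Shrink, Shrink]),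
     (98, [Block [98, 91, 54], Shrink, Block [97, 90, 56], Shrink, Block [96, 76, 71], Shrink,
           Block [95, 81, 67], Shrink, Block [94, 79, 70], Shrink, Block [93, 86, 64], Shrink,
           Block [92, 77, 74], Shrink, Shrink, Shrink, Block [89, 85, 69], Shrink,
           Block [88, 80, 75], Shrink, Block [87, 84, 72], Shrink, Shrink, Shrink, Shrink,
           Block [83, 82, 78], Shrink, Shrink, Shrink, Shrink, Shrink, Shrink, Shrink, Shrink,
           Shrink, Shrink, Reflect 81, Block [27], Block [25, 2], Block [17, 10], Block [14, 12, 1],
           Block [11, 9, 7], Shrink, Reflect 9, Shrink, Shrink]),
     (101, [Block [101, 100, 42], Shrink, Shrink, Block [99, 98, 46], Shrink, Shrink, Centre 81,
            Reflect 81, Block [39, 35, 7], Reflect 27, Centre 9, Shrink]),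
     (104, [Block [104, 103, 36], Shrink, Shrink, Block [102, 101, 40], Shrink, Shrink, Centre 81,
            Block [61, 20], Shrink, Block [60, 21], Shrink, Block [59, 22], Shrink, Block [58, 23],
            Shrink, Block [57, 24], Shrink, Block [56, 25], Shrink, Block [55, 26], Shrink,
            Block [54, 27], Shrink, Block [53, 28], Shrink, Block [52, 29], Shrink, Block [51, 30],
            Shrink, Block [50, 31], Shrink, Block [49, 32], Shrink, Block [48, 33], Shrink,
            Block [47, 18, 16], Shrink, Reflect 81, Block [45, 19, 17], Block [41, 34, 6], Shrink,
            Shrink, Shrink, Shrink, Shrink, Shrink, Shrink, Shrink, Shrink, Shrink, Shrink, Shrink,
            Shrink, Shrink, Shrink, Shrink, Shrink, Shrink, Shrink, Block [15, 12], Shrink,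
            Block [14, 8, 5], Shrink, Block [13, 10, 4], Shrink, Shrink, Block [11, 9, 7], Shrink,
            Shrink, Shrink, Shrink, Shrink, Shrink, Shrink, Shrink]),
     (107, [Block [107, 106, 30], Shrink, Shrink, Block [105, 104, 34], Shrink, Shrink, Centre 81,
            Reflect 81, Block [51, 22, 8], Shrink, Block [47, 21, 13], Shrink, Block [20, 7],
            Shrink, Block [19, 6, 2], Shrink, Block [18, 5, 4], Shrink, Block [17, 10], Shrink,
            Block [16, 11], Shrink, Block [15, 9, 3], Shrink, Reflect 27, Block [14, 12, 1], Shrink,
            Shrink, Shrink, Shrink, Shrink, Shrink, Shrink, Shrink, Shrink, Shrink, Shrink,
            Shrink]),
     (110, [Block [110, 109, 24], Shrink, Shrink, Block [108, 107, 28], Shrink, Shrink, Centre 81,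
            Reflect 81, Block [53, 25, 3], Shrink, Shrink, Reflect 27, Shrink]),
     (113, [Block [113, 112, 18], Shrink, Shrink, Block [111, 110, 22], Shrink, Shrink, Centre 81,
            Block [52, 29], Shrink, Block [51, 30], Shrink, Block [50, 31], Shrink, Block [49, 32],
            Shrink, Block [48, 33], Shrink, Block [47, 34], Shrink, Block [46, 35], Shrink,
            Block [45, 36], Shrink, Block [44, 37], Shrink, Block [43, 38], Shrink, Block [42, 39],
            Shrink, Block [41, 25, 15], Shrink, Block [40, 24, 17], Shrink, Shrink, Shrink, Shrink,
            Shrink, Shrink, Shrink, Shrink, Shrink, Shrink, Shrink, Shrink, Centre 27, Shrink,
            Shrink, Reflect 27, Block [12, 10, 5], Block [9]]),
     (116, [Block [116, 115, 12], Shrink, Shrink, Block [114, 113, 16], Shrink, Shrink, Centre 81,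
            Reflect 81, Centre 27, Reflect 27, Block [15, 11, 1], Centre 3, Shrink]),
     (119, [Block [119, 118, 6], Shrink, Shrink, Block [117, 116, 10], Shrink, Shrink, Centre 81,
            Reflect 81, Centre 27, Reflect 27, Block [17, 7, 3], Shrink, Shrink, Reflect 9,
            Shrink])]"

definition certificates_5 :: "(nat \<times> move list) list" where
  "certificates_5 =
    [(245, [Block [245, 244, 240], Shrink, Shrink, Block [243], Shrink, Reflect 243, Block [3]]),
     (248, [Block [248, 247, 234], Shrink, Shrink, Block [246, 242, 241], Shrink,
            Block [245, 244, 240], Shrink, Shrink, Block [243], Shrink, Shrink, Shrink, Shrink,
            Reflect 243, Block [9]]),
     (251, [Block [251, 250, 228], Shrink, Shrink, Block [249, 248, 232], Shrink, Shrink,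
            Centre 243, Reflect 243, Block [15, 11, 1], Centre 3, Shrink]),
     (254, [Block [254, 253, 222], Shrink, Shrink, Block [252, 251, 226], Shrink, Shrink,
            Centre 243, Reflect 243, Block [21, 6], Block [17, 7, 3], Shrink, Shrink, Reflect 9,
            Shrink]),
     (257, [Block [257, 256, 216], Shrink, Shrink, Block [255, 252, 222], Shrink,
            Block [254, 244, 231], Shrink, Block [253, 239, 237], Shrink, Shrink,
            Block [251, 240, 238], Shrink, Block [250, 243, 236], Shrink, Block [249, 245, 235],
            Shrink, Block [248, 247, 234], Shrink, Shrink, Block [246, 242, 241], Shrink, Shrink,
            Shrink, Shrink, Shrink, Shrink, Shrink, Shrink, Shrink, Shrink, Shrink, Shrink, Shrink,
            Reflect 243, Block [27], Block [21, 6], Block [12, 8, 7], Block [9], Shrink, Shrink,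
            Shrink, Shrink]),
     (260, [Block [260, 253, 216], Shrink, Block [259, 252, 218], Shrink, Block [258, 238, 233],
            Shrink, Block [257, 243, 229], Shrink, Block [256, 241, 232], Shrink,
            Block [255, 248, 226], Shrink, Block [254, 239, 236], Shrink, Shrink, Shrink,
            Block [251, 247, 231], Shrink, Block [250, 242, 237], Shrink, Block [249, 246, 234],
            Shrink, Shrink, Shrink, Shrink, Block [245, 244, 240], Shrink, Shrink, Shrink, Shrink,
            Shrink, Shrink, Shrink, Shrink, Shrink, Shrink, Reflect 243, Block [27], Block [25, 2],
            Block [17, 10], Block [14, 12, 1], Block [11, 9, 7], Shrink, Reflect 9, Shrink,
            Shrink]),
     (263, [Block [263, 262, 204], Shrink, Shrink, Block [261, 260, 208], Shrink, Shrink,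
            Centre 243, Reflect 243, Block [39, 35, 7], Reflect 27, Centre 9, Shrink]),
     (266, [Block [266, 256, 207], Shrink, Block [265, 264, 200], Shrink, Shrink,
            Block [263, 261, 205], Shrink, Block [262, 245, 222], Shrink, Shrink,
            Block [260, 243, 226], Shrink, Block [259, 239, 231], Shrink, Block [258, 247, 224],
            Shrink, Block [257, 255, 217], Shrink, Shrink, Shrink, Block [254, 238, 237], Shrink,
            Block [253, 251, 225], Shrink, Block [252, 242, 235], Shrink, Shrink,
            Block [250, 246, 233], Shrink, Block [249, 244, 236], Shrink, Block [248, 241, 240],
            Shrink, Shrink, Shrink, Shrink, Shrink, Shrink, Shrink, Shrink, Shrink, Shrink, Shrink,
            Shrink, Shrink, Shrink, Reflect 243, Block [43, 38], Block [36, 26, 19], Block [21, 6],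
            Block [18, 5, 4], Block [17, 10], Block [12, 8, 7], Shrink, Shrink, Shrink, Shrink,
            Shrink]),
     (269, [Block [269, 268, 192], Shrink, Shrink, Block [267, 266, 196], Shrink, Shrink,
            Centre 243, Reflect 243, Block [51, 22, 8], Shrink, Block [47, 21, 13], Shrink,
            Block [20, 7], Shrink, Block [19, 6, 2], Shrink, Block [18, 5, 4], Shrink,
            Block [17, 10], Shrink, Block [16, 11], Shrink, Block [15, 9, 3], Shrink, Reflect 27,
            Block [14, 12, 1], Shrink, Shrink, Shrink, Shrink, Shrink, Shrink, Shrink, Shrink,
            Shrink, Shrink, Shrink, Shrink]),
     (272, [Block [272, 271, 186], Shrink, Shrink, Block [270, 269, 190], Shrink, Shrink,
            Centre 243, Reflect 243, Block [57, 24], Block [53, 25, 3], Shrink, Shrink, Reflect 27,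
            Shrink]),
     (275, [Block [275, 257, 197], Shrink, Block [274, 272, 183], Shrink, Block [273, 256, 200],
            Shrink, Shrink, Block [271, 264, 194], Shrink, Block [270, 261, 198], Shrink,
            Block [269, 245, 215], Shrink, Block [268, 250, 211], Shrink, Block [267, 259, 203],
            Shrink, Block [266, 238, 225], Shrink, Block [265, 243, 221], Shrink, Shrink,
            Block [263, 258, 208], Shrink, Block [262, 239, 228], Shrink, Shrink,
            Block [260, 236, 233], Shrink, Shrink, Shrink, Shrink, Shrink, Block [255, 252, 222],
            Shrink, Block [254, 241, 234], Shrink, Block [253, 249, 227], Shrink, Shrink,
            Block [251, 246, 232], Shrink, Shrink, Shrink, Block [248, 244, 237], Shrink,
            Block [247, 242, 240], Shrink, Shrink, Shrink, Shrink, Shrink, Shrink, Shrink, Shrink,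
            Shrink, Shrink, Shrink, Shrink, Reflect 243, Block [60, 11, 10], Block [49, 32],
            Block [46, 28, 7], Shrink, Block [45, 21, 15], Block [43, 22, 16], Block [40, 35, 6],
            Shrink, Block [18, 9]]),
     (278, [Block [278, 277, 174], Shrink, Shrink, Block [276, 275, 178], Shrink, Shrink,
            Centre 243, Reflect 243, Block [69, 12], Block [65, 16], Centre 27, Reflect 27,
            Block [15, 11, 1], Centre 3, Shrink]),
     (281, [Block [281, 280, 168], Shrink, Shrink, Block [279, 278, 172], Shrink, Shrink,
            Centre 243, Reflect 243, Block [75, 6], Block [71, 10], Centre 27, Reflect 27,
            Block [17, 7, 3], Shrink, Shrink, Reflect 9, Shrink]),
     (284, [Block [284, 268, 177], Shrink, Block [283, 263, 183], Shrink, Block [282, 259, 188],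
            Shrink, Block [281, 253, 195], Shrink, Block [280, 252, 197], Shrink,
            Block [279, 242, 208], Shrink, Block [278, 247, 204], Shrink, Block [277, 240, 212],
            Shrink, Block [276, 236, 217], Shrink, Block [275, 264, 190], Shrink,
            Block [274, 254, 201], Shrink, Block [273, 245, 211], Shrink, Block [272, 266, 191],
            Shrink, Block [271, 243, 215], Shrink, Block [270, 241, 218], Shrink,
            Block [269, 234, 226], Shrink, Shrink, Block [267, 255, 207], Shrink, Shrink,
            Block [265, 244, 220], Shrink, Shrink, Shrink, Block [262, 239, 228], Shrink,
            Block [261, 246, 222], Shrink, Block [260, 256, 213], Shrink, Shrink,
            Block [258, 238, 233], Shrink, Block [257, 237, 235], Shrink, Shrink, Shrink, Shrink,
            Shrink, Shrink, Block [251, 249, 229], Shrink, Block [250, 248, 231], Shrink, Shrink,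
            Shrink, Shrink, Shrink, Shrink, Shrink, Shrink, Shrink, Shrink, Shrink, Shrink, Shrink,
            Shrink, Shrink, Shrink, Shrink, Shrink, Reflect 243, Block [66, 15], Block [60, 21],
            Block [55, 26], Block [53, 28], Block [52, 23, 6], Block [48, 25, 8], Block [46, 35],
            Block [42, 32, 7], Block [39, 30, 12], Block [36, 31, 14], Block [17, 10], Shrink,
            Block [9], Shrink, Shrink, Shrink, Shrink]),
     (287, [Block [287, 282, 160], Shrink, Block [286, 285, 158], Shrink, Shrink,
            Block [284, 277, 168], Shrink, Block [283, 281, 165], Shrink, Shrink, Shrink,
            Block [280, 271, 178], Shrink, Block [279, 258, 192], Shrink, Block [278, 269, 182],
            Shrink, Shrink, Block [276, 256, 197], Shrink, Block [275, 268, 186], Shrink,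
            Block [274, 254, 201], Shrink, Block [273, 260, 196], Shrink, Block [272, 248, 209],
            Shrink, Shrink, Block [270, 265, 194], Shrink, Shrink, Shrink, Block [267, 251, 211],
            Shrink, Block [266, 242, 221], Shrink, Shrink, Block [264, 238, 227], Shrink,
            Block [263, 244, 222], Shrink, Block [262, 235, 232], Shrink, Block [261, 243, 225],
            Shrink, Shrink, Block [259, 250, 220], Shrink, Shrink, Block [257, 246, 226], Shrink,
            Shrink, Block [255, 245, 229], Shrink, Shrink, Block [253, 240, 236], Shrink,
            Block [252, 247, 230], Shrink, Shrink, Shrink, Block [249, 241, 239], Shrink, Shrink,
            Shrink, Shrink, Shrink, Shrink, Shrink, Shrink, Shrink, Shrink, Shrink, Shrink,
            Reflect 243, Block [85, 83, 75], Block [78, 3], Block [65, 16], Block [61, 18, 2],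
            Block [57, 13, 11], Block [51, 23, 7], Block [49, 32], Block [47, 34],
            Block [46, 21, 14], Block [42, 22, 17], Block [8, 1], Reflect 9, Shrink, Shrink,
            Shrink]),
     (290, [Block [290, 289, 150], Shrink, Shrink, Block [288, 287, 154], Shrink, Shrink,
            Centre 243, Block [199, 44], Shrink, Block [198, 45], Shrink, Block [197, 46], Shrink,
            Block [196, 47], Shrink, Block [195, 48], Shrink, Block [194, 49], Shrink,
            Block [193, 50], Shrink, Block [192, 51], Shrink, Block [191, 52], Shrink,
            Block [190, 53], Shrink, Block [189, 54], Shrink, Block [188, 55], Shrink,
            Block [187, 56], Shrink, Block [186, 57], Shrink, Block [185, 58], Shrink,
            Block [184, 59], Shrink, Block [183, 60], Shrink, Block [182, 61], Shrink,
            Block [181, 62], Shrink, Block [180, 63], Shrink, Block [179, 64], Shrink,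
            Block [178, 65], Shrink, Block [177, 66], Shrink, Block [176, 67], Shrink,
            Block [175, 68], Shrink, Block [174, 69], Shrink, Block [173, 70], Shrink,
            Block [172, 71], Shrink, Block [171, 72], Shrink, Block [170, 73], Shrink,
            Block [169, 74], Shrink, Block [168, 75], Shrink, Block [167, 76], Shrink,
            Block [166, 77], Shrink, Block [165, 78], Shrink, Block [164, 79], Shrink,
            Block [163, 80], Shrink, Block [162, 81], Shrink, Block [161, 82], Shrink,
            Block [160, 83], Shrink, Block [159, 84], Shrink, Block [158, 85], Shrink,
            Block [157, 86], Shrink, Block [156, 87], Shrink, Block [155, 88], Shrink, Shrink,
            Block [153, 90], Shrink, Block [152, 91], Shrink, Block [151, 92], Shrink, Shrink,
            Block [149, 94], Shrink, Block [148, 95], Shrink, Block [147, 96], Shrink,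
            Block [146, 97], Shrink, Block [145, 98], Shrink, Block [144, 99], Shrink,
            Block [143, 100], Shrink, Block [142, 101], Shrink, Block [141, 102], Shrink,
            Block [140, 103], Shrink, Block [139, 104], Shrink, Block [138, 105], Shrink,
            Block [137, 106], Shrink, Block [136, 107], Shrink, Block [135, 108], Shrink,
            Block [134, 109], Shrink, Block [133, 110], Shrink, Block [132, 111], Shrink,
            Block [131, 112], Shrink, Block [130, 113], Shrink, Block [129, 114], Shrink,
            Block [128, 115], Shrink, Block [127, 116], Shrink, Block [126, 117], Shrink,
            Block [125, 118], Shrink, Block [124, 119], Shrink, Block [123, 120], Shrink,
            Block [122, 93, 28], Shrink, Block [121, 89, 33], Shrink, Shrink, Shrink, Shrink,
            Shrink, Shrink, Shrink, Shrink, Shrink, Shrink, Shrink, Shrink, Shrink, Shrink, Shrink,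
            Shrink, Shrink, Shrink, Shrink, Shrink, Shrink, Shrink, Shrink, Shrink, Shrink, Shrink,
            Shrink, Shrink, Shrink, Shrink, Shrink, Shrink, Shrink, Shrink, Shrink, Shrink, Shrink,
            Shrink, Shrink, Shrink, Shrink, Shrink, Shrink, Shrink, Shrink, Shrink, Shrink, Shrink,
            Shrink, Shrink, Shrink, Shrink, Shrink, Shrink, Shrink, Shrink, Shrink, Shrink, Shrink,
            Shrink, Shrink, Shrink, Shrink, Shrink, Shrink, Shrink, Shrink, Shrink, Shrink, Shrink,
            Shrink, Shrink, Shrink, Shrink, Shrink, Shrink, Shrink, Shrink, Reflect 81,
            Block [37, 36, 8], Shrink, Shrink, Block [35, 27, 19], Shrink, Block [34, 29, 18],
            Shrink, Shrink, Block [32, 25, 24], Shrink, Block [31, 30, 20], Shrink, Shrink, Shrink,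
            Shrink, Shrink, Reflect 27, Block [9], Block [7, 2], Block [3]]),
     (293, [Block [293, 292, 144], Shrink, Shrink, Block [291, 290, 148], Shrink, Shrink,
            Centre 243, Block [196, 47], Shrink, Block [195, 48], Shrink, Block [194, 49], Shrink,
            Block [193, 50], Shrink, Block [192, 51], Shrink, Block [191, 52], Shrink,
            Block [190, 53], Shrink, Block [189, 54], Shrink, Block [188, 55], Shrink,
            Block [187, 56], Shrink, Block [186, 57], Shrink, Block [185, 58], Shrink,
            Block [184, 59], Shrink, Block [183, 60], Shrink, Block [182, 61], Shrink,
            Block [181, 62], Shrink, Block [180, 63], Shrink, Block [179, 64], Shrink,
            Block [178, 65], Shrink, Block [177, 66], Shrink, Block [176, 67], Shrink,
            Block [175, 68], Shrink, Block [174, 69], Shrink, Block [173, 70], Shrink,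
            Block [172, 71], Shrink, Block [171, 72], Shrink, Block [170, 73], Shrink,
            Block [169, 74], Shrink, Block [168, 75], Shrink, Block [167, 76], Shrink,
            Block [166, 77], Shrink, Block [165, 78], Shrink, Block [164, 79], Shrink,
            Block [163, 80], Shrink, Block [162, 81], Shrink, Block [161, 82], Shrink,
            Block [160, 83], Shrink, Block [159, 84], Shrink, Block [158, 85], Shrink,
            Block [157, 86], Shrink, Block [156, 87], Shrink, Block [155, 88], Shrink,
            Block [154, 89], Shrink, Block [153, 90], Shrink, Block [152, 91], Shrink,
            Block [151, 92], Shrink, Block [150, 93], Shrink, Block [149, 94], Shrink, Shrink,
            Block [147, 96], Shrink, Block [146, 97], Shrink, Block [145, 98], Shrink, Shrink,
            Block [143, 100], Shrink, Block [142, 101], Shrink, Block [141, 102], Shrink,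
            Block [140, 103], Shrink, Block [139, 104], Shrink, Block [138, 105], Shrink,
            Block [137, 106], Shrink, Block [136, 107], Shrink, Block [135, 108], Shrink,
            Block [134, 109], Shrink, Block [133, 110], Shrink, Block [132, 111], Shrink,
            Block [131, 112], Shrink, Block [130, 113], Shrink, Block [129, 114], Shrink,
            Block [128, 115], Shrink, Block [127, 116], Shrink, Block [126, 117], Shrink,
            Block [125, 118], Shrink, Block [124, 119], Shrink, Block [123, 120], Shrink,
            Block [122, 99, 22], Shrink, Block [121, 95, 27], Shrink, Shrink, Shrink, Shrink,
            Shrink, Shrink, Shrink, Shrink, Shrink, Shrink, Shrink, Shrink, Shrink, Shrink, Shrink,
            Shrink, Shrink, Shrink, Shrink, Shrink, Shrink, Shrink, Shrink, Shrink, Shrink, Shrink,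
            Shrink, Shrink, Shrink, Shrink, Shrink, Shrink, Shrink, Shrink, Shrink, Shrink, Shrink,
            Shrink, Shrink, Shrink, Shrink, Shrink, Shrink, Shrink, Shrink, Shrink, Shrink, Shrink,
            Shrink, Shrink, Shrink, Shrink, Shrink, Shrink, Shrink, Shrink, Shrink, Shrink, Shrink,
            Shrink, Shrink, Shrink, Shrink, Shrink, Shrink, Shrink, Shrink, Shrink, Shrink, Shrink,
            Shrink, Shrink, Shrink, Shrink, Shrink, Reflect 81, Block [34, 33, 14], Shrink, Shrink,
            Block [32, 31, 18], Shrink, Shrink, Block [30, 26, 25], Shrink, Block [29, 28, 24],
            Shrink, Shrink, Shrink, Shrink, Shrink, Shrink, Reflect 27, Block [13, 9, 5]]),
     (296, [Block [296, 295, 138], Shrink, Shrink, Block [294, 293, 142], Shrink, Shrink,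
            Centre 243, Reflect 243, Block [105, 101, 37], Reflect 81, Block [44, 31, 6], Shrink,
            Block [30, 29, 22], Shrink, Shrink, Centre 27, Reflect 27, Block [21, 5, 1], Shrink]),
     (299, [Block [299, 298, 132], Shrink, Shrink, Block [297, 296, 136], Shrink, Shrink,
            Centre 243, Reflect 243, Block [111, 107, 25], Reflect 81, Centre 27, Shrink]),
     (302, [Block [302, 301, 126], Shrink, Shrink, Block [300, 299, 130], Shrink, Shrink,
            Centre 243, Reflect 243, Block [117, 113, 13], Block [55, 26], Shrink, Block [54, 27],
            Shrink, Block [53, 28], Shrink, Block [52, 29], Shrink, Block [51, 30], Shrink,
            Block [50, 31], Shrink, Block [49, 32], Shrink, Block [48, 33], Shrink, Block [47, 34],
            Shrink, Block [46, 35], Shrink, Block [45, 36], Shrink, Block [44, 37], Shrink,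
            Block [43, 38], Shrink, Block [42, 25, 14], Shrink, Reflect 81, Block [39, 24, 18],
            Shrink, Shrink, Shrink, Shrink, Shrink, Shrink, Shrink, Shrink, Shrink, Shrink, Shrink,
            Shrink, Shrink, Shrink, Shrink, Shrink, Reflect 27, Block [9]]),
     (305, [Block [305, 304, 120], Shrink, Shrink, Block [303, 302, 124], Shrink, Shrink,
            Centre 243, Reflect 243, Block [123, 119, 1], Reflect 81, Reflect 27, Centre 3,
            Shrink]),
     (308, [Block [308, 307, 114], Shrink, Shrink, Block [306, 305, 118], Shrink, Shrink,
            Centre 243, Reflect 243, Block [129, 61, 53], Shrink, Block [125, 60, 58], Shrink,
            Block [59, 22], Shrink, Shrink, Block [57, 24], Shrink, Block [56, 25], Shrink,
            Block [55, 26], Shrink, Block [54, 27], Shrink, Shrink, Block [52, 29], Shrink,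
            Block [51, 30], Shrink, Block [50, 31], Shrink, Block [49, 32], Shrink, Block [48, 33],
            Shrink, Block [47, 34], Shrink, Block [46, 35], Shrink, Block [45, 36], Shrink,
            Block [44, 37], Shrink, Block [43, 38], Shrink, Block [42, 39], Shrink,
            Block [41, 28, 12], Shrink, Block [40, 23, 18], Shrink, Shrink, Shrink, Shrink, Shrink,
            Shrink, Shrink, Shrink, Shrink, Shrink, Shrink, Shrink, Shrink, Shrink, Shrink, Shrink,
            Shrink, Shrink, Shrink, Reflect 27, Block [15, 9, 3], Reflect 9, Shrink]),
     (311, [Block [311, 310, 108], Shrink, Shrink, Block [309, 308, 112], Shrink, Shrink,
            Centre 243, Reflect 243, Block [135, 64, 44], Shrink, Block [131, 63, 49], Shrink,
            Block [62, 19], Shrink, Block [61, 20], Shrink, Block [60, 21], Shrink, Block [59, 22],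
            Shrink, Block [58, 23], Shrink, Block [57, 24], Shrink, Block [56, 25], Shrink,
            Block [55, 26], Shrink, Block [54, 27], Shrink, Block [53, 28], Shrink, Block [52, 29],
            Shrink, Block [51, 30], Shrink, Block [50, 18, 13], Shrink, Shrink, Block [48, 17, 16],
            Shrink, Block [47, 34], Shrink, Block [46, 35], Shrink, Block [45, 36], Shrink, Shrink,
            Block [43, 38], Shrink, Block [42, 39], Shrink, Block [41, 32, 8], Shrink,
            Block [40, 31, 10], Shrink, Shrink, Shrink, Block [37, 33, 11], Shrink, Shrink, Shrink,
            Shrink, Shrink, Shrink, Shrink, Shrink, Shrink, Shrink, Shrink, Shrink, Shrink, Shrink,
            Shrink, Shrink, Shrink, Shrink, Shrink, Shrink, Shrink, Shrink, Reflect 27, Shrink,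
            Shrink, Block [14, 7, 6], Block [9], Shrink, Shrink, Shrink, Shrink]),
     (314, [Block [314, 313, 102], Shrink, Shrink, Block [312, 311, 106], Shrink, Shrink,
            Centre 243, Reflect 243, Block [141, 67, 35], Shrink, Block [137, 66, 40], Shrink,
            Block [65, 16], Shrink, Block [64, 17], Shrink, Block [63, 18], Shrink, Block [62, 19],
            Shrink, Block [61, 20], Shrink, Block [60, 21], Shrink, Block [59, 22], Shrink,
            Block [58, 23], Shrink, Block [57, 24], Shrink, Block [56, 25], Shrink,
            Block [55, 15, 11], Shrink, Block [54, 14, 13], Shrink, Block [53, 28], Shrink,
            Block [52, 29], Shrink, Block [51, 30], Shrink, Block [50, 31], Shrink, Block [49, 32],
            Shrink, Block [48, 33], Shrink, Block [47, 34], Shrink, Block [46, 27, 8], Shrink,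
            Block [45, 26, 10], Shrink, Reflect 81, Block [41, 36, 4], Shrink, Shrink, Shrink,
            Shrink, Shrink, Shrink, Shrink, Shrink, Shrink, Shrink, Shrink, Shrink, Shrink, Shrink,
            Shrink, Shrink, Shrink, Shrink, Shrink, Shrink, Shrink, Shrink, Shrink, Shrink,
            Block [12, 9, 6], Shrink, Shrink, Shrink, Shrink, Shrink, Reflect 9, Block [5, 3, 1],
            Shrink]),
     (317, [Block [317, 316, 96], Shrink, Shrink, Block [315, 314, 100], Shrink, Shrink, Centre 243,
            Reflect 243, Block [147, 70, 26], Shrink, Block [143, 69, 31], Shrink, Block [68, 13],
            Shrink, Block [67, 14], Shrink, Block [66, 15], Shrink, Block [65, 16], Shrink,
            Block [64, 17], Shrink, Block [63, 18], Shrink, Block [62, 19], Shrink,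
            Block [61, 12, 8], Shrink, Block [60, 11, 10], Shrink, Block [59, 22], Shrink,
            Block [58, 23], Shrink, Block [57, 24], Shrink, Block [56, 25], Shrink,
            Block [55, 21, 5], Shrink, Block [54, 20, 7], Shrink, Reflect 81, Block [50, 27, 4],
            Shrink, Shrink, Shrink, Shrink, Shrink, Shrink, Shrink, Shrink, Shrink, Shrink, Shrink,
            Shrink, Shrink, Shrink, Shrink, Shrink, Shrink, Shrink, Block [9], Shrink, Shrink,
            Shrink, Reflect 9]),
     (320, [Block [320, 319, 90], Shrink, Shrink, Block [318, 317, 94], Shrink, Shrink, Centre 243,
            Reflect 243, Block [153, 73, 17], Shrink, Block [149, 72, 22], Shrink, Block [71, 10],
            Shrink, Block [70, 11], Shrink, Block [69, 12], Shrink, Block [68, 8, 5], Shrink,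
            Block [67, 14], Shrink, Block [66, 15], Shrink, Block [65, 9, 7], Shrink, Reflect 81,
            Block [64, 13, 4], Block [59, 16, 6], Shrink, Shrink, Shrink, Shrink, Shrink, Shrink,
            Shrink, Shrink, Shrink, Shrink, Shrink, Shrink, Shrink]),
     (323, [Block [323, 322, 84], Shrink, Shrink, Block [321, 320, 88], Shrink, Shrink, Centre 243,
            Reflect 243, Block [159, 76, 8], Shrink, Block [155, 75, 13], Shrink, Block [74, 7],
            Shrink, Block [73, 6, 2], Shrink, Block [72, 5, 4], Shrink, Block [71, 10], Shrink,
            Block [70, 11], Shrink, Block [69, 9, 3], Shrink, Reflect 81, Block [68, 12, 1], Shrink,
            Shrink, Shrink, Shrink, Shrink, Shrink, Shrink, Shrink, Shrink, Shrink, Shrink,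
            Shrink]),
     (326, [Block [326, 325, 78], Shrink, Shrink, Block [324, 323, 82], Shrink, Shrink, Centre 243,
            Reflect 243, Block [161, 79, 3], Shrink, Shrink, Reflect 81, Shrink]),
     (329, [Block [329, 328, 72], Shrink, Shrink, Block [327, 326, 76], Shrink, Shrink, Centre 243,
            Block [160, 83], Shrink, Block [159, 84], Shrink, Block [158, 85], Shrink,
            Block [157, 86], Shrink, Block [156, 87], Shrink, Block [155, 88], Shrink,
            Block [154, 89], Shrink, Block [153, 90], Shrink, Block [152, 91], Shrink,
            Block [151, 92], Shrink, Block [150, 93], Shrink, Block [149, 94], Shrink,
            Block [148, 95], Shrink, Block [147, 96], Shrink, Block [146, 97], Shrink,
            Block [145, 98], Shrink, Block [144, 99], Shrink, Block [143, 100], Shrink,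
            Block [142, 101], Shrink, Block [141, 102], Shrink, Block [140, 103], Shrink,
            Block [139, 104], Shrink, Block [138, 105], Shrink, Block [137, 106], Shrink,
            Block [136, 107], Shrink, Block [135, 108], Shrink, Block [134, 109], Shrink,
            Block [133, 110], Shrink, Block [132, 111], Shrink, Block [131, 112], Shrink,
            Block [130, 113], Shrink, Block [129, 114], Shrink, Block [128, 115], Shrink,
            Block [127, 116], Shrink, Block [126, 117], Shrink, Block [125, 118], Shrink,
            Block [124, 119], Shrink, Block [123, 120], Shrink, Block [122, 79, 42], Shrink,
            Block [121, 78, 44], Shrink, Shrink, Shrink, Shrink, Shrink, Shrink, Shrink, Shrink,
            Shrink, Shrink, Shrink, Shrink, Shrink, Shrink, Shrink, Shrink, Shrink, Shrink, Shrink,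
            Shrink, Shrink, Shrink, Shrink, Shrink, Shrink, Shrink, Shrink, Shrink, Shrink, Shrink,
            Shrink, Shrink, Shrink, Shrink, Shrink, Shrink, Shrink, Shrink, Shrink, Centre 81,
            Shrink, Shrink, Reflect 81, Block [39, 37, 5], Block [9]]),
     (332, [Block [332, 331, 66], Shrink, Shrink, Block [330, 329, 70], Shrink, Shrink, Centre 243,
            Reflect 243, Centre 81, Reflect 81, Block [15, 11, 1], Centre 3, Shrink]),
     (335, [Block [335, 334, 60], Shrink, Shrink, Block [333, 332, 64], Shrink, Shrink, Centre 243,
            Reflect 243, Centre 81, Reflect 81, Block [21, 6], Block [17, 7, 3], Shrink, Shrink,
            Reflect 9, Shrink]),
     (338, [Block [338, 337, 54], Shrink, Shrink, Block [336, 335, 58], Shrink, Shrink, Centre 243,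
            Reflect 243, Centre 81, Block [70, 11], Shrink, Block [69, 12], Shrink, Block [68, 13],
            Shrink, Block [67, 14], Shrink, Block [66, 15], Shrink, Block [65, 16], Shrink,
            Block [64, 17], Shrink, Block [63, 18], Shrink, Block [62, 19], Shrink, Block [61, 20],
            Shrink, Block [60, 21], Shrink, Block [59, 22], Shrink, Shrink, Block [57, 24], Shrink,
            Block [56, 25], Shrink, Block [55, 26], Shrink, Shrink, Block [53, 28], Shrink,
            Block [52, 29], Shrink, Block [51, 30], Shrink, Block [50, 31], Shrink, Block [49, 32],
            Shrink, Block [48, 23, 10], Shrink, Block [47, 34], Shrink, Block [46, 27, 8], Shrink,
            Block [45, 36], Shrink, Block [44, 37], Shrink, Block [43, 38], Shrink, Block [42, 39],
            Shrink, Block [41, 33, 7], Shrink, Block [40, 35, 6], Shrink, Shrink, Shrink, Shrink,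
            Shrink, Shrink, Shrink, Shrink, Shrink, Shrink, Shrink, Shrink, Shrink, Shrink, Shrink,
            Shrink, Shrink, Shrink, Shrink, Shrink, Shrink, Shrink, Shrink, Shrink, Shrink, Shrink,
            Shrink, Shrink, Shrink, Shrink, Shrink, Block [9], Shrink, Shrink, Shrink, Shrink]),
     (341, [Block [341, 340, 48], Shrink, Shrink, Block [339, 338, 52], Shrink, Shrink, Centre 243,
            Reflect 243, Centre 81, Block [67, 14], Shrink, Block [66, 15], Shrink, Block [65, 16],
            Shrink, Block [64, 17], Shrink, Block [63, 18], Shrink, Block [62, 19], Shrink,
            Block [61, 20], Shrink, Block [60, 21], Shrink, Block [59, 22], Shrink, Block [58, 23],
            Shrink, Block [57, 24], Shrink, Block [56, 25], Shrink, Block [55, 26], Shrink,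
            Block [54, 27], Shrink, Block [53, 28], Shrink, Shrink, Block [51, 30], Shrink,
            Block [50, 31], Shrink, Block [49, 32], Shrink, Shrink, Block [47, 34], Shrink,
            Block [46, 35], Shrink, Block [45, 36], Shrink, Block [44, 37], Shrink, Block [43, 38],
            Shrink, Block [42, 39], Shrink, Block [41, 33, 7], Shrink, Block [40, 29, 12], Shrink,
            Shrink, Shrink, Shrink, Shrink, Shrink, Shrink, Shrink, Shrink, Shrink, Shrink, Shrink,
            Shrink, Shrink, Shrink, Shrink, Shrink, Shrink, Shrink, Shrink, Shrink, Shrink, Shrink,
            Shrink, Shrink, Shrink, Shrink, Block [13, 11, 3], Shrink, Shrink, Shrink, Centre 9,
            Shrink, Reflect 9, Block [6, 2, 1], Shrink, Shrink]),
     (344, [Block [344, 343, 42], Shrink, Shrink, Block [342, 341, 46], Shrink, Shrink, Centre 243,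
            Reflect 243, Centre 81, Reflect 81, Block [39, 35, 7], Reflect 27, Centre 9, Shrink]),
     (347, [Block [347, 346, 36], Shrink, Shrink, Block [345, 344, 40], Shrink, Shrink, Centre 243,
            Reflect 243, Centre 81, Block [61, 20], Shrink, Block [60, 21], Shrink, Block [59, 22],
            Shrink, Block [58, 23], Shrink, Block [57, 24], Shrink, Block [56, 25], Shrink,
            Block [55, 26], Shrink, Block [54, 27], Shrink, Block [53, 28], Shrink, Block [52, 29],
            Shrink, Block [51, 30], Shrink, Block [50, 31], Shrink, Block [49, 32], Shrink,
            Block [48, 33], Shrink, Block [47, 18, 16], Shrink, Reflect 81, Block [45, 19, 17],
            Block [41, 34, 6], Shrink, Shrink, Shrink, Shrink, Shrink, Shrink, Shrink, Shrink,
            Shrink, Shrink, Shrink, Shrink, Shrink, Shrink, Shrink, Shrink, Shrink, Shrink, Shrink,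
            Block [15, 12], Shrink, Block [14, 8, 5], Shrink, Block [13, 10, 4], Shrink, Shrink,
            Block [11, 9, 7], Shrink, Shrink, Shrink, Shrink, Shrink, Shrink, Shrink, Shrink]),
     (350, [Block [350, 349, 30], Shrink, Shrink, Block [348, 347, 34], Shrink, Shrink, Centre 243,
            Reflect 243, Centre 81, Reflect 81, Block [51, 22, 8], Shrink, Block [47, 21, 13],
            Shrink, Block [20, 7], Shrink, Block [19, 6, 2], Shrink, Block [18, 5, 4], Shrink,
            Block [17, 10], Shrink, Block [16, 11], Shrink, Block [15, 9, 3], Shrink, Reflect 27,
            Block [14, 12, 1], Shrink, Shrink, Shrink, Shrink, Shrink, Shrink, Shrink, Shrink,
            Shrink, Shrink, Shrink, Shrink]),
     (353, [Block [353, 352, 24], Shrink, Shrink, Block [351, 350, 28], Shrink, Shrink, Centre 243,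
            Reflect 243, Centre 81, Reflect 81, Block [53, 25, 3], Shrink, Shrink, Reflect 27,
            Shrink]),
     (356, [Block [356, 355, 18], Shrink, Shrink, Block [354, 353, 22], Shrink, Shrink, Centre 243,
            Reflect 243, Centre 81, Block [52, 29], Shrink, Block [51, 30], Shrink, Block [50, 31],
            Shrink, Block [49, 32], Shrink, Block [48, 33], Shrink, Block [47, 34], Shrink,
            Block [46, 35], Shrink, Block [45, 36], Shrink, Block [44, 37], Shrink, Block [43, 38],
            Shrink, Block [42, 39], Shrink, Block [41, 25, 15], Shrink, Block [40, 24, 17], Shrink,
            Shrink, Shrink, Shrink, Shrink, Shrink, Shrink, Shrink, Shrink, Shrink, Shrink, Shrink,
            Centre 27, Shrink, Shrink, Reflect 27, Block [12, 10, 5], Block [9]]),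
     (359, [Block [359, 358, 12], Shrink, Shrink, Block [357, 356, 16], Shrink, Shrink, Centre 243,
            Centre 81, Centre 27, Reflect 27, Block [15, 11, 1], Centre 3, Shrink]),
     (362, [Block [362, 361, 6], Shrink, Shrink, Block [360, 359, 10], Shrink, Shrink, Centre 243,
            Centre 81, Centre 27, Reflect 27, Block [17, 7, 3], Shrink, Shrink, Reflect 9,
            Shrink])]"

definition certificates_6 :: "(nat \<times> move list) list" where
  "certificates_6 =
    [(731, [Block [731, 730, 726], Shrink, Shrink, Block [729], Shrink, Reflect 729, Block [3]]),
     (734, [Block [734, 733, 720], Shrink, Shrink, Block [732, 728, 727], Shrink,
            Block [731, 730, 726], Shrink, Shrink, Block [729], Shrink, Shrink, Shrink, Shrink,
            Reflect 729, Block [9]]),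
     (737, [Block [737, 736, 714], Shrink, Shrink, Block [735, 734, 718], Shrink, Shrink,
            Centre 729, Reflect 729, Block [15, 11, 1], Centre 3, Shrink]),
     (740, [Block [740, 739, 708], Shrink, Shrink, Block [738, 737, 712], Shrink, Shrink,
            Centre 729, Reflect 729, Block [21, 6], Block [17, 7, 3], Shrink, Shrink, Reflect 9,
            Shrink]),
     (743, [Block [743, 735, 709], Shrink, Block [742, 733, 712], Shrink, Block [741, 727, 719],
            Shrink, Block [740, 739, 708], Shrink, Shrink, Block [738, 729, 720], Shrink,
            Block [737, 728, 722], Shrink, Block [736, 726, 725], Shrink, Shrink,
            Block [734, 730, 723], Shrink, Shrink, Block [732, 731, 724], Shrink, Shrink, Shrink,
            Shrink, Shrink, Shrink, Shrink, Shrink, Shrink, Shrink, Shrink, Reflect 729,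
            Block [21, 6], Block [20, 7], Shrink, Shrink, Block [17, 10], Block [9]]),
     (746, [Block [746, 742, 699], Shrink, Block [745, 740, 702], Shrink, Block [744, 738, 705],
            Shrink, Block [743, 731, 713], Shrink, Shrink, Block [741, 732, 714], Shrink, Shrink,
            Block [739, 728, 720], Shrink, Shrink, Block [737, 727, 723], Shrink,
            Block [736, 734, 717], Shrink, Block [735, 730, 722], Shrink, Shrink,
            Block [733, 729, 725], Shrink, Shrink, Shrink, Shrink, Shrink, Shrink, Shrink,
            Reflect 729, Block [30, 27, 24], Block [16, 7, 4], Block [15, 12], Block [9],
            Block [6, 2, 1], Shrink, Shrink]),
     (749, [Block [749, 748, 690], Shrink, Shrink, Block [747, 746, 694], Shrink, Shrink,
            Centre 729, Reflect 729, Block [39, 35, 7], Reflect 27, Centre 9, Shrink]),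
     (752, [Block [752, 751, 684], Shrink, Shrink, Block [750, 749, 688], Shrink, Shrink,
            Centre 729, Block [709, 20], Shrink, Block [708, 21], Shrink, Block [707, 18, 4],
            Shrink, Block [706, 15, 8], Shrink, Block [705, 24], Shrink, Block [704, 25], Shrink,
            Block [703, 26], Shrink, Block [702, 27], Shrink, Block [701, 28], Shrink,
            Block [700, 19, 10], Shrink, Reflect 729, Block [45, 29, 7], Shrink, Shrink, Shrink,
            Shrink, Shrink, Shrink, Block [41, 23, 17], Shrink, Reflect 27, Shrink,
            Block [12, 9, 6]]),
     (755, [Block [755, 754, 678], Shrink, Shrink, Block [753, 752, 682], Shrink, Shrink,
            Centre 729, Reflect 729, Block [51, 22, 8], Shrink, Block [47, 21, 13], Shrink,
            Block [20, 7], Shrink, Block [19, 6, 2], Shrink, Block [18, 5, 4], Shrink,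
            Block [17, 10], Shrink, Block [16, 11], Shrink, Block [15, 9, 3], Shrink, Reflect 27,
            Block [14, 12, 1], Shrink, Shrink, Shrink, Shrink, Shrink, Shrink, Shrink, Shrink,
            Shrink, Shrink, Shrink, Shrink]),
     (758, [Block [758, 757, 672], Shrink, Shrink, Block [756, 755, 676], Shrink, Shrink,
            Centre 729, Reflect 729, Block [57, 24], Block [53, 25, 3], Shrink, Shrink, Reflect 27,
            Shrink]),
     (761, [Block [761, 736, 690], Shrink, Block [760, 759, 668], Shrink, Shrink,
            Block [758, 753, 676], Shrink, Block [757, 737, 693], Shrink, Block [756, 735, 696],
            Shrink, Block [755, 741, 691], Shrink, Block [754, 728, 705], Shrink, Shrink,
            Block [752, 738, 697], Shrink, Block [751, 730, 706], Shrink, Block [750, 729, 708],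
            Shrink, Block [749, 721, 717], Shrink, Block [748, 744, 695], Shrink,
            Block [747, 724, 716], Shrink, Block [746, 727, 714], Shrink, Block [745, 739, 703],
            Shrink, Shrink, Block [743, 731, 713], Shrink, Block [742, 726, 719], Shrink, Shrink,
            Block [740, 732, 715], Shrink, Shrink, Shrink, Shrink, Shrink, Shrink,
            Block [734, 733, 720], Shrink, Shrink, Shrink, Shrink, Shrink, Shrink, Shrink, Shrink,
            Shrink, Reflect 729, Block [61, 12, 8], Block [53, 23, 5], Block [39, 26, 16],
            Block [38, 33, 10], Block [36, 24, 21], Block [34, 32, 15], Block [14, 13], Block [9]]),
     (764, [Block [764, 763, 660], Shrink, Shrink, Block [762, 761, 664], Shrink, Shrink,
            Centre 729, Reflect 729, Block [69, 12], Block [65, 16], Centre 27, Reflect 27,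
            Block [15, 11, 1], Centre 3, Shrink]),
     (767, [Block [767, 766, 654], Shrink, Shrink, Block [765, 764, 658], Shrink, Shrink,
            Centre 729, Reflect 729, Block [75, 6], Block [71, 10], Centre 27, Reflect 27,
            Block [17, 7, 3], Shrink, Shrink, Reflect 9, Shrink]),
     (770, [Block [770, 754, 663], Shrink, Block [769, 749, 669], Shrink, Block [768, 745, 674],
            Shrink, Block [767, 739, 681], Shrink, Block [766, 738, 683], Shrink,
            Block [765, 728, 694], Shrink, Block [764, 733, 690], Shrink, Block [763, 726, 698],
            Shrink, Block [762, 722, 703], Shrink, Block [761, 750, 676], Shrink,
            Block [760, 740, 687], Shrink, Block [759, 731, 697], Shrink, Block [758, 752, 677],
            Shrink, Block [757, 729, 701], Shrink, Block [756, 727, 704], Shrink,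
            Block [755, 720, 712], Shrink, Shrink, Block [753, 741, 693], Shrink, Shrink,
            Block [751, 730, 706], Shrink, Shrink, Shrink, Block [748, 725, 714], Shrink,
            Block [747, 732, 708], Shrink, Block [746, 742, 699], Shrink, Shrink,
            Block [744, 724, 719], Shrink, Block [743, 723, 721], Shrink, Shrink, Shrink, Shrink,
            Shrink, Shrink, Block [737, 735, 715], Shrink, Block [736, 734, 717], Shrink, Shrink,
            Shrink, Shrink, Shrink, Shrink, Shrink, Shrink, Shrink, Shrink, Shrink, Shrink, Shrink,
            Shrink, Shrink, Shrink, Shrink, Shrink, Reflect 729, Block [66, 15], Block [60, 21],
            Block [55, 26], Block [53, 28], Block [52, 23, 6], Block [48, 25, 8], Block [46, 35],
            Block [42, 32, 7], Block [39, 30, 12], Block [36, 31, 14], Block [17, 10], Shrink,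
            Block [9], Shrink, Shrink, Shrink, Shrink]),
     (773, [Block [773, 772, 642], Shrink, Shrink, Block [771, 770, 646], Shrink, Shrink,
            Centre 729, Block [688, 41], Shrink, Block [687, 42], Shrink, Block [686, 43], Shrink,
            Block [685, 44], Shrink, Block [684, 45], Shrink, Block [683, 46], Shrink,
            Block [682, 47], Shrink, Block [681, 48], Shrink, Block [680, 49], Shrink,
            Block [679, 50], Shrink, Block [678, 51], Shrink, Block [677, 52], Shrink,
            Block [676, 53], Shrink, Block [675, 54], Shrink, Block [674, 55], Shrink,
            Block [673, 56], Shrink, Block [672, 57], Shrink, Block [671, 58], Shrink,
            Block [670, 59], Shrink, Block [669, 60], Shrink, Block [668, 61], Shrink,
            Block [667, 62], Shrink, Block [666, 63], Shrink, Block [665, 64], Shrink,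
            Block [664, 65], Shrink, Block [663, 66], Shrink, Block [662, 67], Shrink,
            Block [661, 68], Shrink, Block [660, 69], Shrink, Block [659, 70], Shrink,
            Block [658, 71], Shrink, Block [657, 72], Shrink, Block [656, 73], Shrink,
            Block [655, 74], Shrink, Block [654, 75], Shrink, Block [653, 76], Shrink,
            Block [652, 77], Shrink, Block [651, 78], Shrink, Block [650, 79], Shrink,
            Block [649, 80], Shrink, Block [648, 81], Shrink, Block [647, 82], Shrink, Shrink,
            Block [645, 84], Shrink, Block [644, 85], Shrink, Block [643, 86], Shrink, Shrink,
            Block [641, 88], Shrink, Block [640, 89], Shrink, Block [639, 90], Shrink,
            Block [638, 91], Shrink, Block [637, 92], Shrink, Block [636, 93], Shrink,
            Block [635, 94], Shrink, Block [634, 95], Shrink, Block [633, 96], Shrink,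
            Block [632, 97], Shrink, Block [631, 98], Shrink, Block [630, 99], Shrink,
            Block [629, 100], Shrink, Block [628, 101], Shrink, Block [627, 102], Shrink,
            Block [626, 103], Shrink, Block [625, 104], Shrink, Block [624, 105], Shrink,
            Block [623, 106], Shrink, Block [622, 107], Shrink, Block [621, 108], Shrink,
            Block [620, 109], Shrink, Block [619, 110], Shrink, Block [618, 111], Shrink,
            Block [617, 112], Shrink, Block [616, 113], Shrink, Block [615, 114], Shrink,
            Block [614, 115], Shrink, Block [613, 116], Shrink, Block [612, 117], Shrink,
            Block [611, 118], Shrink, Block [610, 119], Shrink, Block [609, 120], Shrink,
            Block [608, 121], Shrink, Block [607, 122], Shrink, Block [606, 123], Shrink,
            Block [605, 124], Shrink, Block [604, 125], Shrink, Block [603, 126], Shrink,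
            Block [602, 127], Shrink, Block [601, 128], Shrink, Block [600, 129], Shrink,
            Block [599, 130], Shrink, Block [598, 131], Shrink, Block [597, 132], Shrink,
            Block [596, 133], Shrink, Block [595, 134], Shrink, Block [594, 135], Shrink,
            Block [593, 136], Shrink, Block [592, 137], Shrink, Block [591, 138], Shrink,
            Block [590, 139], Shrink, Block [589, 140], Shrink, Block [588, 141], Shrink,
            Block [587, 142], Shrink, Block [586, 143], Shrink, Block [585, 144], Shrink,
            Block [584, 145], Shrink, Block [583, 146], Shrink, Block [582, 147], Shrink,
            Block [581, 148], Shrink, Block [580, 149], Shrink, Block [579, 150], Shrink,
            Block [578, 151], Shrink, Block [577, 152], Shrink, Block [576, 153], Shrink,
            Block [575, 154], Shrink, Block [574, 155], Shrink, Block [573, 156], Shrink,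
            Block [572, 157], Shrink, Block [571, 158], Shrink, Block [570, 159], Shrink,
            Block [569, 160], Shrink, Block [568, 161], Shrink, Block [567, 162], Shrink,
            Block [566, 163], Shrink, Block [565, 164], Shrink, Block [564, 165], Shrink,
            Block [563, 166], Shrink, Block [562, 167], Shrink, Block [561, 168], Shrink,
            Block [560, 169], Shrink, Block [559, 87, 83], Shrink, Reflect 729, Reflect 243, Shrink,
            Shrink, Shrink, Shrink, Shrink, Shrink, Shrink, Shrink, Shrink, Shrink, Shrink, Shrink,
            Shrink, Shrink, Shrink, Shrink, Shrink, Shrink, Shrink, Shrink, Shrink, Shrink, Shrink,
            Shrink, Shrink, Shrink, Shrink, Shrink, Shrink, Shrink, Shrink, Shrink,
            Block [170, 40, 33], Shrink, Block [39, 38, 4], Shrink, Shrink, Block [37, 36, 8],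
            Shrink, Shrink, Block [35, 28, 18], Shrink, Block [34, 26, 21], Shrink, Shrink,
            Block [32, 25, 24], Shrink, Block [31, 27, 23], Shrink, Block [30, 29, 22], Shrink,
            Shrink, Shrink, Shrink, Shrink, Shrink, Shrink, Shrink, Shrink, Shrink, Reflect 27,
            Block [19, 6, 2], Shrink, Block [9], Reflect 9, Block [5, 3, 1], Shrink, Shrink,
            Shrink]),
     (776, [Block [776, 775, 636], Shrink, Shrink, Block [774, 773, 640], Shrink, Shrink,
            Centre 729, Block [685, 44], Shrink, Block [684, 45], Shrink, Block [683, 46], Shrink,
            Block [682, 47], Shrink, Block [681, 48], Shrink, Block [680, 49], Shrink,
            Block [679, 50], Shrink, Block [678, 51], Shrink, Block [677, 52], Shrink,
            Block [676, 53], Shrink, Block [675, 54], Shrink, Block [674, 55], Shrink,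
            Block [673, 56], Shrink, Block [672, 57], Shrink, Block [671, 58], Shrink,
            Block [670, 59], Shrink, Block [669, 60], Shrink, Block [668, 61], Shrink,
            Block [667, 62], Shrink, Block [666, 63], Shrink, Block [665, 64], Shrink,
            Block [664, 65], Shrink, Block [663, 66], Shrink, Block [662, 67], Shrink,
            Block [661, 68], Shrink, Block [660, 69], Shrink, Block [659, 70], Shrink,
            Block [658, 71], Shrink, Block [657, 72], Shrink, Block [656, 73], Shrink,
            Block [655, 74], Shrink, Block [654, 75], Shrink, Block [653, 76], Shrink,
            Block [652, 77], Shrink, Block [651, 78], Shrink, Block [650, 79], Shrink,
            Block [649, 80], Shrink, Block [648, 81], Shrink, Block [647, 82], Shrink,
            Block [646, 83], Shrink, Block [645, 84], Shrink, Block [644, 85], Shrink,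
            Block [643, 86], Shrink, Block [642, 87], Shrink, Block [641, 88], Shrink, Shrink,
            Block [639, 90], Shrink, Block [638, 91], Shrink, Block [637, 92], Shrink, Shrink,
            Block [635, 94], Shrink, Block [634, 95], Shrink, Block [633, 96], Shrink,
            Block [632, 97], Shrink, Block [631, 98], Shrink, Block [630, 99], Shrink,
            Block [629, 100], Shrink, Block [628, 101], Shrink, Block [627, 102], Shrink,
            Block [626, 103], Shrink, Block [625, 104], Shrink, Block [624, 105], Shrink,
            Block [623, 106], Shrink, Block [622, 107], Shrink, Block [621, 108], Shrink,
            Block [620, 109], Shrink, Block [619, 110], Shrink, Block [618, 111], Shrink,
            Block [617, 112], Shrink, Block [616, 113], Shrink, Block [615, 114], Shrink,
            Block [614, 115], Shrink, Block [613, 116], Shrink, Block [612, 117], Shrink,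
            Block [611, 118], Shrink, Block [610, 119], Shrink, Block [609, 120], Shrink,
            Block [608, 121], Shrink, Block [607, 122], Shrink, Block [606, 123], Shrink,
            Block [605, 124], Shrink, Block [604, 125], Shrink, Block [603, 126], Shrink,
            Block [602, 127], Shrink, Block [601, 128], Shrink, Block [600, 129], Shrink,
            Block [599, 130], Shrink, Block [598, 131], Shrink, Block [597, 132], Shrink,
            Block [596, 133], Shrink, Block [595, 134], Shrink, Block [594, 135], Shrink,
            Block [593, 136], Shrink, Block [592, 137], Shrink, Block [591, 138], Shrink,
            Block [590, 139], Shrink, Block [589, 140], Shrink, Block [588, 141], Shrink,
            Block [587, 142], Shrink, Block [586, 143], Shrink, Block [585, 144], Shrink,
            Block [584, 145], Shrink, Block [583, 146], Shrink, Block [582, 147], Shrink,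
            Block [581, 148], Shrink, Block [580, 149], Shrink, Block [579, 150], Shrink,
            Block [578, 151], Shrink, Block [577, 152], Shrink, Block [576, 153], Shrink,
            Block [575, 154], Shrink, Block [574, 155], Shrink, Block [573, 156], Shrink,
            Block [572, 157], Shrink, Block [571, 158], Shrink, Block [570, 159], Shrink,
            Block [569, 160], Shrink, Block [568, 161], Shrink, Block [567, 162], Shrink,
            Block [566, 163], Shrink, Block [565, 164], Shrink, Block [564, 165], Shrink,
            Block [563, 166], Shrink, Block [562, 167], Shrink, Block [561, 168], Shrink,
            Block [560, 169], Shrink, Block [559, 170], Shrink, Block [558, 171], Shrink,
            Block [557, 172], Shrink, Block [556, 173], Shrink, Block [555, 174], Shrink,
            Block [554, 175], Shrink, Block [553, 176], Shrink, Block [552, 177], Shrink,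
            Block [551, 178], Shrink, Block [550, 179], Shrink, Block [549, 180], Shrink,
            Block [548, 181], Shrink, Block [547, 93, 89], Shrink, Reflect 729, Reflect 243, Shrink,
            Shrink, Shrink, Shrink, Shrink, Shrink, Shrink, Shrink, Shrink, Shrink, Shrink, Shrink,
            Shrink, Shrink, Shrink, Shrink, Shrink, Block [182, 43, 18], Shrink, Reflect 81,
            Block [38, 37, 6], Shrink, Shrink, Block [36, 35, 10], Shrink, Shrink, Centre 27,
            Reflect 27, Block [17, 9, 1], Reflect 9, Shrink, Block [3]]),
     (779, [Block [779, 767, 641], Shrink, Block [778, 754, 655], Shrink, Block [777, 775, 635],
            Shrink, Block [776, 758, 653], Shrink, Shrink, Block [774, 759, 654], Shrink,
            Block [773, 743, 671], Shrink, Block [772, 748, 667], Shrink, Block [771, 738, 678],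
            Shrink, Block [770, 765, 652], Shrink, Block [769, 768, 650], Shrink, Shrink, Shrink,
            Block [766, 760, 661], Shrink, Shrink, Block [764, 732, 691], Shrink,
            Block [763, 740, 684], Shrink, Block [762, 730, 695], Shrink, Block [761, 744, 682],
            Shrink, Shrink, Shrink, Shrink, Block [757, 721, 709], Shrink, Block [756, 726, 705],
            Shrink, Block [755, 753, 679], Shrink, Shrink, Shrink, Block [752, 734, 701], Shrink,
            Block [751, 724, 712], Shrink, Block [750, 731, 706], Shrink, Block [749, 727, 711],
            Shrink, Shrink, Block [747, 741, 699], Shrink, Block [746, 725, 716], Shrink,
            Block [745, 722, 720], Shrink, Shrink, Shrink, Block [742, 735, 710], Shrink, Shrink,
            Shrink, Block [739, 729, 719], Shrink, Shrink, Block [737, 733, 717], Shrink,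
            Block [736, 728, 723], Shrink, Shrink, Shrink, Shrink, Shrink, Shrink, Shrink, Shrink,
            Shrink, Shrink, Shrink, Shrink, Shrink, Shrink, Shrink, Shrink, Shrink, Shrink,
            Reflect 729, Block [94, 75, 74], Block [88, 79, 76], Block [77, 4], Block [68, 13],
            Block [62, 19], Block [58, 17, 6], Block [51, 30], Block [50, 24, 7], Block [47, 34],
            Block [45, 28, 8], Block [38, 23, 20], Block [18, 9], Block [12, 10, 5], Shrink, Shrink,
            Shrink, Shrink, Shrink, Shrink, Shrink]),
     (782, [Block [782, 781, 624], Shrink, Shrink, Block [780, 779, 628], Shrink, Shrink,
            Centre 729, Reflect 729, Block [105, 101, 37], Reflect 81, Block [44, 31, 6], Shrink,
            Block [30, 29, 22], Shrink, Shrink, Centre 27, Reflect 27, Block [21, 5, 1], Shrink]),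
     (785, [Block [785, 784, 618], Shrink, Shrink, Block [783, 782, 622], Shrink, Shrink,
            Centre 729, Reflect 729, Block [111, 107, 25], Reflect 81, Centre 27, Shrink]),
     (788, [Block [788, 787, 612], Shrink, Shrink, Block [786, 785, 616], Shrink, Shrink,
            Centre 729, Reflect 729, Block [117, 113, 13], Block [55, 26], Shrink, Block [54, 27],
            Shrink, Block [53, 28], Shrink, Block [52, 29], Shrink, Block [51, 30], Shrink,
            Block [50, 31], Shrink, Block [49, 32], Shrink, Block [48, 33], Shrink, Block [47, 34],
            Shrink, Block [46, 35], Shrink, Block [45, 36], Shrink, Block [44, 37], Shrink,
            Block [43, 38], Shrink, Block [42, 25, 14], Shrink, Reflect 81, Block [39, 24, 18],
            Shrink, Shrink, Shrink, Shrink, Shrink, Shrink, Shrink, Shrink, Shrink, Shrink, Shrink,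
            Shrink, Shrink, Shrink, Shrink, Shrink, Reflect 27, Block [9]]),
     (791, [Block [791, 790, 606], Shrink, Shrink, Block [789, 788, 610], Shrink, Shrink,
            Centre 729, Reflect 729, Block [123, 119, 1], Reflect 81, Reflect 27, Centre 3,
            Shrink]),
     (794, [Block [794, 793, 600], Shrink, Shrink, Block [792, 791, 604], Shrink, Shrink,
            Centre 729, Reflect 729, Block [129, 61, 53], Shrink, Block [125, 60, 58], Shrink,
            Block [59, 22], Shrink, Shrink, Block [57, 24], Shrink, Block [56, 25], Shrink,
            Block [55, 26], Shrink, Block [54, 27], Shrink, Shrink, Block [52, 29], Shrink,
            Block [51, 30], Shrink, Block [50, 31], Shrink, Block [49, 32], Shrink, Block [48, 33],
            Shrink, Block [47, 34], Shrink, Block [46, 35], Shrink, Block [45, 36], Shrink,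
            Block [44, 37], Shrink, Block [43, 38], Shrink, Block [42, 39], Shrink,
            Block [41, 28, 12], Shrink, Block [40, 23, 18], Shrink, Shrink, Shrink, Shrink, Shrink,
            Shrink, Shrink, Shrink, Shrink, Shrink, Shrink, Shrink, Shrink, Shrink, Shrink, Shrink,
            Shrink, Shrink, Shrink, Reflect 27, Block [15, 9, 3], Reflect 9, Shrink]),
     (797, [Block [797, 796, 594], Shrink, Shrink, Block [795, 794, 598], Shrink, Shrink,
            Centre 729, Reflect 729, Block [135, 64, 44], Shrink, Block [131, 63, 49], Shrink,
            Block [62, 19], Shrink, Block [61, 20], Shrink, Block [60, 21], Shrink, Block [59, 22],
            Shrink, Block [58, 23], Shrink, Block [57, 24], Shrink, Block [56, 25], Shrink,
            Block [55, 26], Shrink, Block [54, 27], Shrink, Block [53, 28], Shrink, Block [52, 29],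
            Shrink, Block [51, 30], Shrink, Block [50, 18, 13], Shrink, Shrink, Block [48, 17, 16],
            Shrink, Block [47, 34], Shrink, Block [46, 35], Shrink, Block [45, 36], Shrink, Shrink,
            Block [43, 38], Shrink, Block [42, 39], Shrink, Block [41, 32, 8], Shrink,
            Block [40, 31, 10], Shrink, Shrink, Shrink, Block [37, 33, 11], Shrink, Shrink, Shrink,
            Shrink, Shrink, Shrink, Shrink, Shrink, Shrink, Shrink, Shrink, Shrink, Shrink, Shrink,
            Shrink, Shrink, Shrink, Shrink, Shrink, Shrink, Shrink, Shrink, Reflect 27, Shrink,
            Shrink, Block [14, 7, 6], Block [9], Shrink, Shrink, Shrink, Shrink]),
     (800, [Block [800, 799, 588], Shrink, Shrink, Block [798, 797, 592], Shrink, Shrink,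
            Centre 729, Reflect 729, Block [141, 58, 44], Block [137, 60, 46], Reflect 81,
            Block [37, 35, 9], Block [23, 4], Block [21, 6], Block [13, 11, 3], Shrink,
            Block [12, 10, 5], Shrink, Shrink, Shrink, Shrink, Reflect 9]),
     (803, [Block [803, 801, 583], Shrink, Block [802, 800, 585], Shrink, Shrink, Shrink,
            Centre 729, Reflect 729, Block [146, 70, 27], Shrink, Block [144, 67, 32],
            Block [69, 8, 4], Shrink, Block [68, 13], Shrink, Shrink, Block [66, 15], Shrink,
            Block [65, 16], Shrink, Block [64, 17], Shrink, Block [63, 11, 7], Shrink,
            Block [62, 19], Shrink, Block [61, 20], Shrink, Block [60, 21], Shrink,
            Block [59, 12, 10], Shrink, Reflect 81, Block [54, 22, 5], Shrink, Shrink, Shrink,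
            Shrink, Block [49, 18, 14], Shrink, Shrink, Shrink, Shrink, Shrink, Shrink, Shrink,
            Shrink, Shrink, Block [9], Shrink, Shrink, Shrink, Reflect 9]),
     (806, [Block [806, 805, 576], Shrink, Shrink, Block [804, 803, 580], Shrink, Shrink,
            Centre 729, Reflect 729, Block [153, 73, 17], Shrink, Block [149, 72, 22], Shrink,
            Block [71, 10], Shrink, Block [70, 11], Shrink, Block [69, 12], Shrink,
            Block [68, 8, 5], Shrink, Block [67, 14], Shrink, Block [66, 15], Shrink,
            Block [65, 9, 7], Shrink, Reflect 81, Block [64, 13, 4], Block [59, 16, 6], Shrink,
            Shrink, Shrink, Shrink, Shrink, Shrink, Shrink, Shrink, Shrink, Shrink, Shrink, Shrink,
            Shrink]),
     (809, [Block [809, 808, 570], Shrink, Shrink, Block [807, 806, 574], Shrink, Shrink,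
            Centre 729, Reflect 729, Block [159, 76, 8], Shrink, Block [155, 75, 13], Shrink,
            Block [74, 7], Shrink, Block [73, 6, 2], Shrink, Block [72, 5, 4], Shrink,
            Block [71, 10], Shrink, Block [70, 11], Shrink, Block [69, 9, 3], Shrink, Reflect 81,
            Block [68, 12, 1], Shrink, Shrink, Shrink, Shrink, Shrink, Shrink, Shrink, Shrink,
            Shrink, Shrink, Shrink, Shrink]),
     (812, [Block [812, 811, 564], Shrink, Shrink, Block [810, 809, 568], Shrink, Shrink,
            Centre 729, Reflect 729, Block [165, 78], Block [161, 79, 3], Shrink, Shrink,
            Reflect 81, Shrink]),
     (815, [Block [815, 814, 558], Shrink, Shrink, Block [813, 812, 562], Shrink, Shrink,
            Centre 729, Block [646, 77, 6], Shrink, Block [645, 84], Shrink, Block [644, 85],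
            Shrink, Block [643, 86], Shrink, Block [642, 78, 9], Shrink, Block [641, 76, 12],
            Shrink, Block [640, 89], Shrink, Reflect 729, Shrink, Block [171, 72],
            Block [167, 69, 7], Block [88, 80, 75], Shrink, Block [87, 82, 74], Shrink, Shrink,
            Shrink, Shrink, Block [83, 81, 79], Shrink, Shrink, Shrink, Shrink, Shrink, Shrink,
            Shrink, Shrink, Shrink, Shrink, Reflect 81, Shrink, Shrink]),
     (818, [Block [818, 817, 552], Shrink, Shrink, Block [816, 815, 556], Shrink, Shrink,
            Centre 729, Reflect 729, Block [177, 66], Block [173, 70], Centre 81, Reflect 81,
            Block [15, 11, 1], Centre 3, Shrink]),
     (821, [Block [821, 820, 546], Shrink, Shrink, Block [819, 818, 550], Shrink, Shrink,
            Centre 729, Reflect 729, Block [183, 60], Block [179, 64], Centre 81, Reflect 81,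
            Block [21, 6], Block [17, 7, 3], Shrink, Shrink, Reflect 9, Shrink]),
     (824, [Block [824, 823, 540], Shrink, Shrink, Block [822, 821, 544], Shrink, Shrink,
            Centre 729, Reflect 729, Block [189, 54], Block [185, 58], Centre 81, Block [70, 11],
            Shrink, Block [69, 12], Shrink, Block [68, 13], Shrink, Block [67, 14], Shrink,
            Block [66, 15], Shrink, Block [65, 16], Shrink, Block [64, 17], Shrink, Block [63, 18],
            Shrink, Block [62, 19], Shrink, Block [61, 20], Shrink, Block [60, 21], Shrink,
            Block [59, 22], Shrink, Shrink, Block [57, 24], Shrink, Block [56, 25], Shrink,
            Block [55, 26], Shrink, Shrink, Block [53, 28], Shrink, Block [52, 29], Shrink,
            Block [51, 30], Shrink, Block [50, 31], Shrink, Block [49, 32], Shrink,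
            Block [48, 23, 10], Shrink, Block [47, 34], Shrink, Block [46, 27, 8], Shrink,
            Block [45, 36], Shrink, Block [44, 37], Shrink, Block [43, 38], Shrink, Block [42, 39],
            Shrink, Block [41, 33, 7], Shrink, Block [40, 35, 6], Shrink, Shrink, Shrink, Shrink,
            Shrink, Shrink, Shrink, Shrink, Shrink, Shrink, Shrink, Shrink, Shrink, Shrink, Shrink,
            Shrink, Shrink, Shrink, Shrink, Shrink, Shrink, Shrink, Shrink, Shrink, Shrink, Shrink,
            Shrink, Shrink, Shrink, Shrink, Shrink, Block [9], Shrink, Shrink, Shrink, Shrink]),
     (827, [Block [827, 826, 534], Shrink, Shrink, Block [825, 824, 538], Shrink, Shrink,
            Centre 729, Reflect 729, Block [195, 48], Block [191, 52], Centre 81, Block [67, 14],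
            Shrink, Block [66, 15], Shrink, Block [65, 16], Shrink, Block [64, 17], Shrink,
            Block [63, 18], Shrink, Block [62, 19], Shrink, Block [61, 20], Shrink, Block [60, 21],
            Shrink, Block [59, 22], Shrink, Block [58, 23], Shrink, Block [57, 24], Shrink,
            Block [56, 25], Shrink, Block [55, 26], Shrink, Block [54, 27], Shrink, Block [53, 28],
            Shrink, Shrink, Block [51, 30], Shrink, Block [50, 31], Shrink, Block [49, 32], Shrink,
            Shrink, Block [47, 34], Shrink, Block [46, 35], Shrink, Block [45, 36], Shrink,
            Block [44, 37], Shrink, Block [43, 38], Shrink, Block [42, 39], Shrink,
            Block [41, 33, 7], Shrink, Block [40, 29, 12], Shrink, Shrink, Shrink, Shrink, Shrink,
            Shrink, Shrink, Shrink, Shrink, Shrink, Shrink, Shrink, Shrink, Shrink, Shrink, Shrink,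
            Shrink, Shrink, Shrink, Shrink, Shrink, Shrink, Shrink, Shrink, Shrink, Shrink, Shrink,
            Block [13, 11, 3], Shrink, Shrink, Shrink, Centre 9, Shrink, Reflect 9, Block [6, 2, 1],
            Shrink, Shrink]),
     (830, [Block [830, 829, 528], Shrink, Shrink, Block [828, 827, 532], Shrink, Shrink,
            Centre 729, Reflect 729, Block [201, 42], Block [197, 46], Centre 81, Reflect 81,
            Block [39, 35, 7], Reflect 27, Centre 9, Shrink]),
     (833, [Block [833, 832, 522], Shrink, Shrink, Block [831, 830, 526], Shrink, Shrink,
            Centre 729, Reflect 729, Block [207, 36], Block [203, 40], Centre 81, Block [61, 20],
            Shrink, Block [60, 21], Shrink, Block [59, 22], Shrink, Block [58, 23], Shrink,
            Block [57, 24], Shrink, Block [56, 25], Shrink, Block [55, 26], Shrink, Block [54, 27],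
            Shrink, Block [53, 28], Shrink, Block [52, 29], Shrink, Block [51, 30], Shrink,
            Block [50, 31], Shrink, Block [49, 32], Shrink, Block [48, 33], Shrink,
            Block [47, 18, 16], Shrink, Reflect 81, Block [45, 19, 17], Block [41, 34, 6], Shrink,
            Shrink, Shrink, Shrink, Shrink, Shrink, Shrink, Shrink, Shrink, Shrink, Shrink, Shrink,
            Shrink, Shrink, Shrink, Shrink, Shrink, Shrink, Shrink, Block [15, 12], Shrink,
            Block [14, 8, 5], Shrink, Block [13, 10, 4], Shrink, Shrink, Block [11, 9, 7], Shrink,
            Shrink, Shrink, Shrink, Shrink, Shrink, Shrink, Shrink]),
     (836, [Block [836, 835, 516], Shrink, Shrink, Block [834, 833, 520], Shrink, Shrink,
            Centre 729, Reflect 729, Block [213, 30], Block [209, 34], Centre 81, Reflect 81,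
            Block [51, 22, 8], Shrink, Block [47, 21, 13], Shrink, Block [20, 7], Shrink,
            Block [19, 6, 2], Shrink, Block [18, 5, 4], Shrink, Block [17, 10], Shrink,
            Block [16, 11], Shrink, Block [15, 9, 3], Shrink, Reflect 27, Block [14, 12, 1], Shrink,
            Shrink, Shrink, Shrink, Shrink, Shrink, Shrink, Shrink, Shrink, Shrink, Shrink,
            Shrink]),
     (839, [Block [839, 838, 510], Shrink, Shrink, Block [837, 836, 514], Shrink, Shrink,
            Centre 729, Reflect 729, Block [219, 24], Block [215, 28], Centre 81, Reflect 81,
            Block [53, 25, 3], Shrink, Shrink, Reflect 27, Shrink]),
     (842, [Block [842, 841, 504], Shrink, Shrink, Block [840, 839, 508], Shrink, Shrink,
            Centre 729, Reflect 729, Block [225, 18], Block [221, 22], Centre 81, Block [52, 29],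
            Shrink, Block [51, 30], Shrink, Block [50, 31], Shrink, Block [49, 32], Shrink,
            Block [48, 33], Shrink, Block [47, 34], Shrink, Block [46, 35], Shrink, Block [45, 36],
            Shrink, Block [44, 37], Shrink, Block [43, 38], Shrink, Block [42, 39], Shrink,
            Block [41, 25, 15], Shrink, Block [40, 24, 17], Shrink, Shrink, Shrink, Shrink, Shrink,
            Shrink, Shrink, Shrink, Shrink, Shrink, Shrink, Shrink, Centre 27, Shrink, Shrink,
            Reflect 27, Block [12, 10, 5], Block [9]])]"

lemma certified_2: "certified 2 1 certificates_2"
  by (simp add: certified_def certificates_2_def small_powers_of_three_eq upt_rec)

lemma certified_3: "certified 3 4 certificates_3"
  by (simp add: certified_def certificates_3_def small_powers_of_three_eq upt_rec)

lemma certified_4: "certified 4 13 certificates_4"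
  by (simp add: certified_def certificates_4_def small_powers_of_three_eq upt_rec)

lemma certified_5: "certified 5 40 certificates_5"
  by (simp add: certified_def certificates_5_def small_powers_of_three_eq upt_rec)

lemma certified_6: "certified 6 38 certificates_6"
  by (simp add: certified_def certificates_6_def small_powers_of_three_eq upt_rec)

lemma nat_mod_3_eq_2_decompose:
  fixes P n :: nat
  assumes "3 dvd P" "P + 1 < n" "n mod 3 = 2"
  obtains k where "n = P + 2 + 3 * k"
proof -
  have "\<exists>k. n = P + 2 + 3 * k"
    using assms by presburger
  then show ?thesis
    using that by blast
qed

lemma exceptional_candidate_below_845_certified:
  assumes "exceptional_candidate n" "n < 845"
  obtains t K cs k where "certified t K cs" "k < K" "n = 3 ^ t + 2 + 3 * k"
proof -
  obtain t where t: "3 ^ t + 1 < n" "2 * n \<le> 3 ^ Suc t" and "n mod 3 = 2"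
    using assms(1) unfolding exceptional_candidate_def by blast
  have "t \<noteq> 0"
    using t by (intro notI) simp
  then have "3 dvd (3::nat) ^ t"
    by simp
  then obtain k where n: "n = 3 ^ t + 2 + 3 * k"
    using t(1) \<open>n mod 3 = 2\<close> by (rule nat_mod_3_eq_2_decompose)
  have "t < 7"
  proof (rule ccontr)
    assume "\<not> t < 7"
    then have "(3::nat) ^ 7 \<le> 3 ^ t"
      by (intro power_increasing) auto
    then show False
      using t(1) assms(2) by simp
  qed
  obtain K cs where "certified t K cs" "k < K"
  proof -
    have "t = 1 \<or> t = 2 \<or> t = 3 \<or> t = 4 \<or> t = 5 \<or> t = 6"
      using \<open>t \<noteq> 0\<close> \<open>t < 7\<close> by arith
    then show ?thesis
    proof (elim disjE)
      assume "t = 1"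
      then show ?thesis using t(2) n by simp
    next
      assume "t = 2"
      then show ?thesis using that[of 1 certificates_2] certified_2 t(2) n by simp
    next
      assume "t = 3"
      then show ?thesis using that[of 4 certificates_3] certified_3 t(2) n by simp
    next
      assume "t = 4"
      then show ?thesis using that[of 13 certificates_4] certified_4 t(2) n by simp
    next
      assume "t = 5"
      then show ?thesis using that[of 40 certificates_5] certified_5 t(2) n by simp
    next
      assume "t = 6"
      then show ?thesis using that[of 38 certificates_6] certified_6 assms(2) n by simp
    qed
  qed
  with n that show ?thesis
    by blast
qed

lemma admits_three_good_if_exceptional_below_845:
  assumes "exceptional_candidate n" "n < 845" and smaller: "\<And>k. k < n \<Longrightarrow> admits_three_good k"
  shows "admits_three_good n"
proof -
  obtain t K cs k where c: "certified t K cs" "k < K" and n: "n = 3 ^ t + 2 + 3 * k"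
    using exceptional_candidate_below_845_certified[OF assms(1,2)] .
  obtain ms b where "replay n [] [] ms = Some b" "b < n"
    using certified_replay[OF c] unfolding n by blast
  then show ?thesis
    using admits_three_good_if_replay smaller by blast
qed

theorem theorem1:
  assumes "\<exists>n::nat. n > 0 \<and> \<not> admits_three_good n"
  defines "m \<equiv> LEAST n::nat. n > 0 \<and> \<not> admits_three_good n"
  shows "m \<ge> 845 \<and> m mod 3 = 2 \<and>
         (\<exists>t::nat. t \<ge> 4 \<and> 3 ^ t + 1 < m \<and> 2 * m < 3 ^ (t + 1) + 1)"
proof -
  have m: "\<not> admits_three_good m"
    using LeastI_ex[OF assms(1)] unfolding m_def by blast
  have smaller: "admits_three_good k" if "k < m" for k
    using not_less_Least[OF that[unfolded m_def]] admits_three_good_0 by (cases "k = 0") auto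
  have "exceptional_candidate m"
    using admits_three_good_if_not_exceptional smaller m by blast
  then obtain t where t: "3 ^ t + 1 < m" "2 * m \<le> 3 ^ Suc t" "m mod 3 = 2"
    unfolding exceptional_candidate_def by blast
  have "845 \<le> m"
    using admits_three_good_if_exceptional_below_845 \<open>exceptional_candidate m\<close> smaller m
    by (meson not_le)
  have "6 \<le> t"
  proof (rule ccontr)
    assume "\<not> 6 \<le> t"
    then have "(3::nat) ^ Suc t \<le> 3 ^ 6"
      by (intro power_increasing) auto
    then show False
      using t(2) \<open>845 \<le> m\<close> by simp
  qed
  then show ?thesis
    using t \<open>845 \<le> m\<close> by (intro conjI exI[of _ t]) auto
qed

end
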